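(* Assume $\mathfrak g$ is noncompact and has no nonzero proper $\sigma$-stable ideals. Let $Y\in\mathfrak t^+$, $a=\exp Y$, $\sigma_a=\mathrm{Ad}(a)\sigma\mathrm{Ad}(a)^{-1}=\sigma\,\mathrm{Ad}(a)^{-2}$ and $\tau=\sigma\theta$. Then $$\mathfrak g^{\tau\sigma_a}=\{X\in\mathfrak g\mid\tau\sigma_aX=X\}=\mathfrak z_{\mathfrak k}(Y)=\{X\in\mathfrak k\mid[Y,X]=0\}.$$ Moreover $\mathfrak g^{\tau\sigma_a}=(\mathfrak h'\cap\mathrm{Ad}(a)\mathfrak h)\oplus(\mathfrak q'\cap\mathrm{Ad}(a)\mathfrak q)$, so that both $\mathfrak h'\cap\mathrm{Ad}(a)\mathfrak h$ and $\mathfrak q'\cap\mathrm{Ad}(a)\mathfrak q$ are contained in $\mathfrak k$.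
   Context: Let $G$ be a connected real semisimple Lie group with Lie algebra $\mathfrak g$. Let $\sigma$ be an involution of $G$ and $\theta$ a Cartan involution with $\sigma\theta=\theta\sigma$; the same letters denote the induced involutions of $\mathfrak g$. Let $\mathfrak g=\mathfrak k\oplus\mathfrak m$ and $\mathfrak g=\mathfrak h\oplus\mathfrak q$ be the $\pm1$-eigenspace decompositions for $\theta$ and $\sigma$. Put $\mathfrak h'=(\mathfrak k\cap\mathfrak h)\oplus(\mathfrak m\cap\mathfrak q)$ and $\mathfrak q'=(\mathfrak k\cap\mathfrak q)\oplus(\mathfrak m\cap\mathfrak h)$; these are the $\pm1$-eigenspaces of $\sigma\theta$. Let $\mathfrak t$ be a maximal abelian subspace of $\mathfrak k\cap\mathfrak q$. For a linear form $\alpha:\mathfrak t\to i\mathbb R$ put - $\mathfrak g_\mathbb C(\mathfrak t,\alpha)=\{X\in\mathfrak g_\mathbb C\mid[Y,X]=\alpha(Y)X\ \forall Y\in\mathfrak t\}$, - $\mathfrak m_\mathbb C(\mathfrak t,\alpha)=\mathfrak g_\mathbb C(\mathfrak t,\alpha)\cap\mathfrak m_\mathbb C$. Let $\Sigma(\mathfrak m_\mathbb C,\mathfrak t)=\{\alpha\ne0\mid\mathfrak m_\mathbb C(\mathfrak t,\alpha)\ne\{0\}\}$ and $\mathfrak t^+=\{Y\in\mathfrak t\mid|\alpha(Y)|<\pi/2\ \forall\alpha\in\Sigma(\mathfrak m_\mathbb C,\mathfrak t)\}$. *)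

theory Defs
  imports "HOL-Analysis.Analysis"
begin

text \<open>A finite-dimensional real Lie algebra is modelled as a Euclidean space 'g
  carrying a bracket br.\<close>

definition lie_bracket :: "('g::euclidean_space \<Rightarrow> 'g \<Rightarrow> 'g) \<Rightarrow> bool" where
  "lie_bracket br \<longleftrightarrow> (\<forall>x. linear (br x)) \<and> (\<forall>y. linear (\<lambda>x. br x y)) \<and>
     (\<forall>x. br x x = 0) \<and>
     (\<forall>x y z. br x (br y z) + br y (br z x) + br z (br x y) = 0)"

definition lin_trace :: "('g::euclidean_space \<Rightarrow> 'g) \<Rightarrow> real" where
  "lin_trace f = (\<Sum>b\<in>Basis. f b \<bullet> b)"

definition killing :: "('g::euclidean_space \<Rightarrow> 'g \<Rightarrow> 'g) \<Rightarrow> 'g \<Rightarrow> 'g \<Rightarrow> real" where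
  "killing br X Z = lin_trace (\<lambda>W. br X (br Z W))"

definition lie_ideal :: "('g::euclidean_space \<Rightarrow> 'g \<Rightarrow> 'g) \<Rightarrow> 'g set \<Rightarrow> bool" where
  "lie_ideal br I \<longleftrightarrow> subspace I \<and> (\<forall>x y. y \<in> I \<longrightarrow> br x y \<in> I)"

definition derived :: "('g::euclidean_space \<Rightarrow> 'g \<Rightarrow> 'g) \<Rightarrow> 'g set \<Rightarrow> 'g set" where
  "derived br I = span {br x y | x y. x \<in> I \<and> y \<in> I}"

definition solvable_ideal :: "('g::euclidean_space \<Rightarrow> 'g \<Rightarrow> 'g) \<Rightarrow> 'g set \<Rightarrow> bool" where
  "solvable_ideal br I \<longleftrightarrow> lie_ideal br I \<and> (\<exists>k. (derived br ^^ k) I = {0})"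

definition semisimple :: "('g::euclidean_space \<Rightarrow> 'g \<Rightarrow> 'g) \<Rightarrow> bool" where
  "semisimple br \<longleftrightarrow> lie_bracket br \<and> (\<forall>I. solvable_ideal br I \<longrightarrow> I = {0})"

text \<open>A semisimple Lie algebra is compact iff its Killing form is negative definite.\<close>
definition lie_compact :: "('g::euclidean_space \<Rightarrow> 'g \<Rightarrow> 'g) \<Rightarrow> bool" where
  "lie_compact br \<longleftrightarrow> (\<forall>X. X \<noteq> 0 \<longrightarrow> killing br X X < 0)"

definition lie_aut :: "('g::euclidean_space \<Rightarrow> 'g \<Rightarrow> 'g) \<Rightarrow> ('g \<Rightarrow> 'g) \<Rightarrow> bool" where
  "lie_aut br f \<longleftrightarrow> linear f \<and> bij f \<and> (\<forall>x y. f (br x y) = br (f x) (f y))"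

definition lie_involution :: "('g::euclidean_space \<Rightarrow> 'g \<Rightarrow> 'g) \<Rightarrow> ('g \<Rightarrow> 'g) \<Rightarrow> bool" where
  "lie_involution br s \<longleftrightarrow> lie_aut br s \<and> (\<forall>x. s (s x) = x)"

definition cartan_involution :: "('g::euclidean_space \<Rightarrow> 'g \<Rightarrow> 'g) \<Rightarrow> ('g \<Rightarrow> 'g) \<Rightarrow> bool" where
  "cartan_involution br \<theta> \<longleftrightarrow> lie_involution br \<theta> \<and>
     (\<forall>X. X \<noteq> 0 \<longrightarrow> - killing br X (\<theta> X) > 0)"

definition eig1 :: "('g::real_vector \<Rightarrow> 'g) \<Rightarrow> 'g set" where
  "eig1 f = {X. f X = X}"

definition eigm1 :: "('g::real_vector \<Rightarrow> 'g) \<Rightarrow> 'g set" where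
  "eigm1 f = {X. f X = - X}"

text \<open>exp(ad Y) as a power series; Ad(exp Y) = exp(ad Y).\<close>
definition exp_ad :: "('g::euclidean_space \<Rightarrow> 'g \<Rightarrow> 'g) \<Rightarrow> 'g \<Rightarrow> 'g \<Rightarrow> 'g" where
  "exp_ad br Y X = (\<Sum>n. ((br Y) ^^ n) X /\<^sub>R fact n)"

definition max_abelian :: "('g::euclidean_space \<Rightarrow> 'g \<Rightarrow> 'g) \<Rightarrow> 'g set \<Rightarrow> 'g set \<Rightarrow> bool" where
  "max_abelian br t S \<longleftrightarrow> subspace t \<and> t \<subseteq> S \<and> (\<forall>x\<in>t. \<forall>y\<in>t. br x y = 0) \<and>
     (\<forall>u. subspace u \<and> t \<subseteq> u \<and> u \<subseteq> S \<and> (\<forall>x\<in>u. \<forall>y\<in>u. br x y = 0) \<longrightarrow> u = t)"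

text \<open>A root alpha = i*beta in Sigma(m_C, t): there is a nonzero X = X1 + i X2 in m_C with
  [Z, X] = i beta(Z) X for all Z in t, i.e. [Z,X1] = -beta(Z) X2 and [Z,X2] = beta(Z) X1;
  and alpha is nonzero on t.\<close>
definition m_root :: "('g::euclidean_space \<Rightarrow> 'g \<Rightarrow> 'g) \<Rightarrow> 'g set \<Rightarrow> 'g set \<Rightarrow> ('g \<Rightarrow> real) \<Rightarrow> bool" where
  "m_root br t m \<beta> \<longleftrightarrow>
     (\<exists>X1\<in>m. \<exists>X2\<in>m. (X1 \<noteq> 0 \<or> X2 \<noteq> 0) \<and>
        (\<forall>Z\<in>t. br Z X1 = - (\<beta> Z *\<^sub>R X2) \<and> br Z X2 = \<beta> Z *\<^sub>R X1)) \<and>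
     (\<exists>Z\<in>t. \<beta> Z \<noteq> 0)"

definition t_plus :: "('g::euclidean_space \<Rightarrow> 'g \<Rightarrow> 'g) \<Rightarrow> 'g set \<Rightarrow> 'g set \<Rightarrow> 'g set" where
  "t_plus br t m = {Y\<in>t. \<forall>\<beta>. m_root br t m \<beta> \<longrightarrow> \<bar>\<beta> Y\<bar> < pi / 2}"

end

theory Submission
  imports Defs
begin

text \<open>
  Put \<open>Ad = exp(ad Y)\<close>. As \<open>\<theta>\<close> fixes and \<open>\<sigma>\<close> negates \<open>Y\<close>, \<open>\<tau>\<sigma>\<^sub>a = Ad\<^sup>-\<^sup>1 Ad\<^sup>-\<^sup>1 \<theta> = exp(-2 ad Y) \<theta>\<close>,
  so \<open>X\<close> is fixed iff its components \<open>X\<^sub>\<kk> \<in> \<kk>\<close> and \<open>X\<^sub>\<mm> \<in> \<mm>\<close> satisfy \<open>exp(-2 ad Y) X\<^sub>\<kk> = X\<^sub>\<kk>\<close>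
  and \<open>exp(-2 ad Y) X\<^sub>\<mm> = -X\<^sub>\<mm>\<close>. For the inner product \<open>B\<^sub>\<theta>(X, Z) = -B(X, \<theta> Z)\<close> the operator
  \<open>ad Y\<close> is skew, so \<open>-ad(Y)\<^sup>2\<close> is diagonalisable with eigenvalues \<open>\<mu>\<^sup>2 \<ge> 0\<close>, and on the plane
  spanned by an eigenvector \<open>e\<close> and \<open>[Y, e]\<close> the map \<open>exp(-2 ad Y)\<close> is the rotation by \<open>2\<mu>\<close>.
  On \<open>\<mm>\<close> every such \<open>\<mu>\<close> is \<open>|\<beta>(Y)|\<close> for a root \<open>\<beta> \<in> \<Sigma>(\<mm>\<^sub>\<complex>, \<tt>)\<close>, hence \<open>\<mu> < \<pi>/2\<close> because
  \<open>Y \<in> \<tt>\<^sup>+\<close>; so \<open>X\<^sub>\<mm> = 0\<close>. On \<open>\<kk>\<close> a vector is fixed by a nontrivial rotation only if \<open>\<mu> \<ge> \<pi>\<close>;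
  then its brackets with the eigenvectors in \<open>\<mm>\<close> vanish, since they would be eigenvectors in \<open>\<mm>\<close>
  with eigenvalues \<open>(\<mu> \<plusminus> \<nu>)\<^sup>2 > (\<pi>/2)\<^sup>2\<close>. But the elements of \<open>\<kk>\<close> centralising \<open>\<mm>\<close> form a
  \<open>\<sigma>\<close>-stable ideal, which is zero by irreducibility as \<open>\<gg>\<close> is noncompact. Hence \<open>[Y, X\<^sub>\<kk>] = 0\<close>.
  Splitting the centraliser of \<open>Y\<close> in \<open>\<kk>\<close> into \<open>\<sigma>\<close>-eigenspaces, on which \<open>Ad\<close> is the
  identity, gives the decomposition.
\<close>

lemma lin_trace_comp_commute:
  fixes f g :: "'g::euclidean_space \<Rightarrow> 'g"
  assumes "linear f" and "linear g"
  shows "lin_trace (\<lambda>x. f (g x)) = lin_trace (\<lambda>x. g (f x))"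
proof -
  have expand: "h u \<bullet> b = (\<Sum>c\<in>Basis. (u \<bullet> c) * (h c \<bullet> b))" if "linear h" for h :: "'g \<Rightarrow> 'g" and u b
  proof -
    have "h u = h (\<Sum>c\<in>Basis. (u \<bullet> c) *\<^sub>R c)" by (simp add: euclidean_representation)
    also have "\<dots> = (\<Sum>c\<in>Basis. (u \<bullet> c) *\<^sub>R h c)"
      using that by (simp add: linear_sum linear_scale)
    finally show ?thesis by (simp add: inner_sum_left)
  qed
  have "lin_trace (\<lambda>x. f (g x)) = (\<Sum>b\<in>Basis. \<Sum>c\<in>Basis. (g b \<bullet> c) * (f c \<bullet> b))"
    unfolding lin_trace_def by (rule sum.cong[OF refl expand[OF \<open>linear f\<close>]])
  also have "\<dots> = (\<Sum>c\<in>Basis. \<Sum>b\<in>Basis. (f c \<bullet> b) * (g b \<bullet> c))"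
    by (subst sum.swap) (simp add: mult.commute)
  also have "\<dots> = lin_trace (\<lambda>x. g (f x))"
    unfolding lin_trace_def by (rule sum.cong[OF refl expand[OF \<open>linear g\<close>, symmetric]])
  finally show ?thesis .
qed

lemma lin_trace_add: "lin_trace (\<lambda>x. f x + g x) = lin_trace f + lin_trace g"
  by (simp add: lin_trace_def inner_add_left sum.distrib)

lemma lin_trace_diff: "lin_trace (\<lambda>x. f x - g x) = lin_trace f - lin_trace g"
  by (simp add: lin_trace_def inner_diff_left sum_subtractf)

lemma lin_trace_scale: "lin_trace (\<lambda>x. c *\<^sub>R f x) = c * lin_trace f"
  by (simp add: lin_trace_def sum_distrib_left)

lemma self_eq_neg_iff: "x = - x \<longleftrightarrow> (x::'a::real_vector) = 0"
  by (metis eq_neg_iff_add_eq_0 scaleR_2 scaleR_eq_0_iff zero_neq_numeral)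

lemma involution_split:
  fixes f :: "'a::real_vector \<Rightarrow> 'a"
  assumes "linear f" and "\<And>x. f (f x) = x"
  obtains a b where "x = a + b" and "f a = a" and "f b = - b"
proof
  show "x = (1/2) *\<^sub>R (x + f x) + (1/2) *\<^sub>R (x - f x)"
    by (simp add: algebra_simps scaleR_2[symmetric])
  show "f ((1/2) *\<^sub>R (x + f x)) = (1/2) *\<^sub>R (x + f x)"
    "f ((1/2) *\<^sub>R (x - f x)) = - ((1/2) *\<^sub>R (x - f x))"
    using assms by (simp_all add: linear_add linear_diff linear_scale algebra_simps)
qed

lemma involution_split_unique:
  fixes f :: "'a::real_vector \<Rightarrow> 'a"
  assumes "linear f" and "f a = a" "f b = - b" "f a' = a'" "f b' = - b'" and "a + b = a' + b'"
  shows "a = a'" and "b = b'"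
proof -
  have "a - a' = b' - b" using \<open>a + b = a' + b'\<close> by (simp add: algebra_simps)
  moreover have "f (a - a') = a - a'" and "f (b' - b) = - (b' - b)"
    using assms by (simp_all add: linear_diff)
  ultimately have "a - a' = - (a - a')" using assms by (simp add: linear_diff)
  then show "a = a'" by (metis self_eq_neg_iff eq_iff_diff_eq_0)
  with \<open>a + b = a' + b'\<close> show "b = b'" by simp
qed

lemma eig1_Int_eigm1:
  assumes "linear f"
  shows "eig1 f \<inter> eigm1 f = {0}"
  using assms unfolding eig1_def eigm1_def by (auto simp: linear_0) (metis self_eq_neg_iff)

lemma subspace_eig1: "linear f \<Longrightarrow> subspace (eig1 f)"
  unfolding eig1_def subspace_def by (auto simp: linear_add linear_scale linear_0)

lemma subspace_eigm1: "linear f \<Longrightarrow> subspace (eigm1 f)"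
  unfolding eigm1_def subspace_def by (auto simp: linear_add linear_scale linear_0)

text \<open>Bookkeeping for two-term linear combinations, whose coefficients \<open>simp\<close> does not collect.\<close>
lemma lincomb_add:
  "(a *\<^sub>R x + b *\<^sub>R y) + (c *\<^sub>R x + d *\<^sub>R y) = (a + c) *\<^sub>R x + (b + d) *\<^sub>R (y::'a::real_vector)"
  by (simp add: algebra_simps)

lemma lincomb_scale:
  "r *\<^sub>R (a *\<^sub>R x + b *\<^sub>R y) = (r * a) *\<^sub>R x + (r * b) *\<^sub>R (y::'a::real_vector)"
  by (simp add: algebra_simps)

lemma lincomb_eq:
  "a = a' \<Longrightarrow> b = b' \<Longrightarrow> a *\<^sub>R x + b *\<^sub>R y = a' *\<^sub>R x + b' *\<^sub>R (y::'a::real_vector)"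
  by simp

lemma linear_lincomb: "linear f \<Longrightarrow> f (p *\<^sub>R x + q *\<^sub>R y) = p *\<^sub>R f x + q *\<^sub>R f y"
  by (simp add: linear_add linear_scale)

lemma linear_funpow:
  fixes f :: "'a::real_vector \<Rightarrow> 'a"
  assumes "linear f"
  shows "linear (f ^^ n)"
proof (induction n)
  case 0
  show ?case by (simp add: linear_id id_def[symmetric])
next
  case (Suc n)
  then show ?case unfolding funpow.simps(2) by (rule linear_compose[OF _ assms])
qed

lemma dim_less_subspace:
  fixes V W :: "'a::euclidean_space set"
  assumes "subspace V" and "subspace W" and "V \<subseteq> W" and "x \<in> W" and "x \<notin> V"
  shows "dim V < dim W"
proof -
  have "span V = V" and "span W = W" using assms(1,2) span_eq_iff by blast+
  moreover have "V \<subset> W" using assms(3-5) by auto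
  ultimately have "span V \<subset> span W" by metis
  then show ?thesis by (rule dim_psubset)
qed

section \<open>The exponential of \<open>ad\<close>\<close>

lemma exp_ad_sums:
  assumes "linear (br Y)"
  shows "(\<lambda>n. ((br Y) ^^ n) X /\<^sub>R fact n) sums exp_ad br Y X"
proof -
  obtain C where "C > 0" and C: "\<And>x. norm (br Y x) \<le> C * norm x"
    using linear_bounded_pos[OF assms] by blast
  have pow: "norm (((br Y) ^^ n) X) \<le> C ^ n * norm X" for n
  proof (induction n)
    case (Suc n)
    have "norm (((br Y) ^^ Suc n) X) \<le> C * norm (((br Y) ^^ n) X)" using C by simp
    also have "\<dots> \<le> C * (C ^ n * norm X)" using Suc \<open>C > 0\<close> by (simp add: mult_left_mono)
    finally show ?case by (simp add: mult.assoc)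
  qed simp
  have "norm (((br Y) ^^ n) X /\<^sub>R fact n) \<le> norm X * (inverse (fact n) * C ^ n)" for n
    using mult_left_mono[OF pow, of "inverse (fact n)"] by (simp add: algebra_simps)
  then have "summable (\<lambda>n. ((br Y) ^^ n) X /\<^sub>R fact n)"
    by (intro summable_comparison_test'[OF summable_mult[OF summable_exp]])
  then show ?thesis unfolding exp_ad_def by (rule summable_sums)
qed

lemma linear_exp_ad:
  assumes "linear (br Y)"
  shows "linear (exp_ad br Y)"
proof (rule linearI)
  note sums = exp_ad_sums[of br Y, OF assms]
  fix a b
  have "(\<lambda>n. ((br Y) ^^ n) (a + b) /\<^sub>R fact n) sums (exp_ad br Y a + exp_ad br Y b)"
    using sums_add[OF sums sums] linear_funpow[OF assms]
    by (simp add: linear_add scaleR_add_right)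
  then show "exp_ad br Y (a + b) = exp_ad br Y a + exp_ad br Y b"
    using sums_unique2[OF sums] by blast
next
  note sums = exp_ad_sums[of br Y, OF assms]
  fix c :: real and a
  have "(\<lambda>n. ((br Y) ^^ n) (c *\<^sub>R a) /\<^sub>R fact n) sums (c *\<^sub>R exp_ad br Y a)"
    using sums_scaleR_right[OF sums] linear_funpow[OF assms]
    by (simp add: linear_scale mult.commute)
  then show "exp_ad br Y (c *\<^sub>R a) = c *\<^sub>R exp_ad br Y a"
    using sums_unique2[OF sums] by blast
qed

lemma exp_ad_intertwine:
  assumes "linear (br Y)" and "linear (br Y')" and "linear L"
    and "\<And>x. L (br Y x) = br Y' (L x)"
  shows "L (exp_ad br Y X) = exp_ad br Y' (L X)"
proof -
  have "L (((br Y) ^^ n) X) = ((br Y') ^^ n) (L X)" for n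
    by (induction n) (simp_all add: assms(4))
  moreover have "bounded_linear L"
    using \<open>linear L\<close> by (simp add: linear_conv_bounded_linear)
  then have "(\<lambda>n. L (((br Y) ^^ n) X /\<^sub>R fact n)) sums L (exp_ad br Y X)"
    by (rule bounded_linear.sums[OF _ exp_ad_sums[of br Y, OF assms(1)]])
  ultimately have "(\<lambda>n. ((br Y') ^^ n) (L X) /\<^sub>R fact n) sums L (exp_ad br Y X)"
    by (simp add: linear_scale[OF \<open>linear L\<close>])
  then show ?thesis by (metis sums_unique2[OF exp_ad_sums[of br Y', OF assms(2)]])
qed

lemma exp_ad_eq_self:
  assumes "linear (br Y)" and "br Y X = 0"
  shows "exp_ad br Y X = X"
proof -
  have "((br Y) ^^ Suc n) X = 0" for n
    using assms linear_0[OF linear_funpow[OF assms(1)]] by (simp only: funpow_Suc_right o_def)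
  then have "(\<lambda>n. ((br Y) ^^ n) X /\<^sub>R fact n) = (\<lambda>n. if n = 0 then X else 0)"
    by (auto simp: fun_eq_iff gr0_conv_Suc)
  moreover have "(\<lambda>n. if n = 0 then X else 0) sums X"
    using sums_single[of 0 "\<lambda>_. X"] by simp
  ultimately show ?thesis
    using sums_unique2[OF exp_ad_sums[of br Y, OF assms(1)]] by metis
qed

lemma exp_ad_rotation:
  assumes "linear (br Y)" and "br Y e = w" and "br Y w = - (\<mu>\<^sup>2) *\<^sub>R e" and "\<mu> \<noteq> 0"
  shows "exp_ad br Y e = cos \<mu> *\<^sub>R e + (sin \<mu> / \<mu>) *\<^sub>R w"
proof -
  have pow: "((br Y) ^^ n) e
      = (fact n * cos_coeff n * \<mu> ^ n) *\<^sub>R e + (fact n * sin_coeff n * \<mu> ^ n / \<mu>) *\<^sub>R w" for n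
  proof (induction n)
    case 0
    show ?case by (simp add: cos_coeff_def sin_coeff_def)
  next
    case (Suc n)
    have "((br Y) ^^ Suc n) e = br Y (((br Y) ^^ n) e)" by simp
    also have "\<dots> = (fact n * sin_coeff n * \<mu> ^ n / \<mu> * - (\<mu>\<^sup>2)) *\<^sub>R e
        + (fact n * cos_coeff n * \<mu> ^ n) *\<^sub>R w"
      unfolding Suc using assms(1-3) by (simp add: linear_add linear_scale)
    also have "fact n * sin_coeff n * \<mu> ^ n / \<mu> * - (\<mu>\<^sup>2)
        = fact (Suc n) * cos_coeff (Suc n) * \<mu> ^ Suc n"
      using assms(4) by (simp add: cos_coeff_Suc power2_eq_square field_simps)
    also have "fact n * cos_coeff n * \<mu> ^ n = fact (Suc n) * sin_coeff (Suc n) * \<mu> ^ Suc n / \<mu>"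
      using assms(4) by (simp add: sin_coeff_Suc divide_simps)
    finally show ?case by simp
  qed
  have "(\<lambda>n. (cos_coeff n * \<mu> ^ n) *\<^sub>R e + (sin_coeff n * \<mu> ^ n / \<mu>) *\<^sub>R w)
      sums (cos \<mu> *\<^sub>R e + (sin \<mu> / \<mu>) *\<^sub>R w)"
    using cos_converges[of \<mu>] sin_converges[of \<mu>]
    by (intro sums_add sums_scaleR_left sums_divide) (simp_all add: real_scaleR_def)
  moreover have "((br Y) ^^ n) e /\<^sub>R fact n
      = (cos_coeff n * \<mu> ^ n) *\<^sub>R e + (sin_coeff n * \<mu> ^ n / \<mu>) *\<^sub>R w" for n
    by (simp add: pow scaleR_add_right field_simps)
  ultimately show ?thesis using sums_unique2[OF exp_ad_sums[of br Y, OF assms(1)]] by simp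
qed

section \<open>Symmetric operators for a positive definite form\<close>

locale pos_form =
  fixes B :: "'g::euclidean_space \<Rightarrow> 'g \<Rightarrow> real"
  assumes linear_B_left: "linear (\<lambda>x. B x y)" and linear_B_right: "linear (B x)"
    and B_commute: "B x y = B y x" and B_pos: "x \<noteq> 0 \<Longrightarrow> B x x > 0"
begin

lemmas B_simps =
  linear_add[OF linear_B_right] linear_diff[OF linear_B_right] linear_scale[OF linear_B_right]
  linear_neg[OF linear_B_right] linear_0[OF linear_B_right]
  linear_add[OF linear_B_left] linear_diff[OF linear_B_left] linear_scale[OF linear_B_left]
  linear_neg[OF linear_B_left] linear_0[OF linear_B_left]

lemma B_nonneg: "B x x \<ge> 0"
  using B_pos[of x] by (cases "x = 0") (auto simp: B_simps)

lemma B_self_eq_0_iff [simp]: "B x x = 0 \<longleftrightarrow> x = 0"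
  using B_pos[of x] by (cases "x = 0") (auto simp: B_simps)

definition symmetric_on :: "'g set \<Rightarrow> ('g \<Rightarrow> 'g) \<Rightarrow> bool" where
  "symmetric_on W S \<longleftrightarrow>
     linear S \<and> (\<forall>x\<in>W. S x \<in> W) \<and> (\<forall>x\<in>W. \<forall>y\<in>W. B (S x) y = B x (S y))"

lemma symmetric_on_subset:
  assumes "symmetric_on W S" and "V \<subseteq> W" and "\<forall>x\<in>V. S x \<in> V"
  shows "symmetric_on V S"
  using assms unfolding symmetric_on_def by blast

lemma rayleigh_max_attained:
  assumes "subspace W" and "linear S" and "x \<in> W" and "x \<noteq> 0"
  obtains e where "e \<in> W" and "e \<noteq> 0" and "\<forall>w\<in>W. B (S w) w \<le> (B (S e) e / B e e) * B w w"
proof -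
  define K where "K = W \<inter> sphere 0 1"
  define R where "R w = B (S w) w / B w w" for w
  have "compact K"
    unfolding K_def using compact_Int_closed[OF compact_sphere closed_subspace[OF \<open>subspace W\<close>]]
    by (simp add: Int_commute)
  have "(1 / norm x) *\<^sub>R x \<in> K"
    unfolding K_def using assms by (simp add: subspace_scale)
  then have "K \<noteq> {}" by blast
  have bil: "bilinear B" unfolding bilinear_def using linear_B_left linear_B_right by blast
  have "continuous_on UNIV S"
    using \<open>linear S\<close> by (simp add: linear_continuous_on linear_conv_bounded_linear)
  then have "continuous_on K (\<lambda>w. B (S w) w)" and "continuous_on K (\<lambda>w. B w w)"
    by (auto intro: bilinear_continuous_on_compose[OF _ continuous_on_id bil] continuous_on_subset)
  moreover have "\<forall>w\<in>K. B w w \<noteq> 0" unfolding K_def by auto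
  ultimately have "continuous_on K R" unfolding R_def by (rule continuous_on_divide)
  then obtain e where "e \<in> K" and max: "\<forall>y\<in>K. R y \<le> R e"
    using continuous_attains_sup[OF \<open>compact K\<close> \<open>K \<noteq> {}\<close>] by blast
  have "B (S w) w \<le> R e * B w w" if "w \<in> W" for w
  proof (cases "w = 0")
    case False
    have "(1 / norm w) *\<^sub>R w \<in> K" unfolding K_def using that False assms by (simp add: subspace_scale)
    moreover have "R ((1 / norm w) *\<^sub>R w) = R w"
      unfolding R_def using False by (simp add: B_simps linear_scale[OF \<open>linear S\<close>] field_simps)
    ultimately have "R w \<le> R e" using max by metis
    then show ?thesis unfolding R_def using B_pos[OF False] by (simp add: divide_le_eq)
  qed (simp add: B_simps linear_0[OF \<open>linear S\<close>])
  moreover have "e \<in> W" "e \<noteq> 0" using \<open>e \<in> K\<close> unfolding K_def by auto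
  ultimately show ?thesis using that unfolding R_def by blast
qed

text \<open>A maximiser of the Rayleigh quotient is an eigenvector: the quadratic
  \<open>s \<mapsto> l B(e + s d) (e + s d) - B(S(e + s d)) (e + s d)\<close> with \<open>d = S e - l e\<close> is
  nonnegative, vanishes at \<open>s = 0\<close> and has slope \<open>-2 B d d\<close> there.\<close>
lemma rayleigh_maximizer_eigenvector:
  assumes "subspace W" and "symmetric_on W S" and "e \<in> W"
    and max: "\<forall>w\<in>W. B (S w) w \<le> l * B w w" and "B (S e) e = l * B e e"
  shows "S e = l *\<^sub>R e"
proof -
  have "linear S" and S_sym: "\<forall>x\<in>W. \<forall>y\<in>W. B (S x) y = B x (S y)"
    using assms(2) unfolding symmetric_on_def by auto
  define d where "d = S e - l *\<^sub>R e"
  have "d \<in> W"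
    unfolding d_def using assms(1-3) by (simp add: symmetric_on_def subspace_diff subspace_scale)
  define K where "K = l * B d d - B (S d) d"
  have quad: "2 * s * B d d \<le> s\<^sup>2 * K" for s :: real
  proof -
    have "e + s *\<^sub>R d \<in> W" using \<open>e \<in> W\<close> \<open>d \<in> W\<close> assms(1) by (simp add: subspace_add subspace_scale)
    from max[rule_format, OF this]
    have "B (S (e + s *\<^sub>R d)) (e + s *\<^sub>R d) \<le> l * B (e + s *\<^sub>R d) (e + s *\<^sub>R d)" .
    moreover have "B (S d) e = B (S e) d" using S_sym \<open>d \<in> W\<close> \<open>e \<in> W\<close> B_commute by metis
    moreover have "B (S e) d - l * B e d = B d d"
      unfolding d_def using B_commute[of e "S e"] by (simp add: B_simps algebra_simps)
    ultimately show ?thesis using assms(5) B_commute[of d e] unfolding K_def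
      by (simp add: B_simps linear_add[OF \<open>linear S\<close>] linear_scale[OF \<open>linear S\<close>]
          power2_eq_square algebra_simps)
  qed
  have "B d d = 0"
  proof (rule ccontr)
    assume "B d d \<noteq> 0"
    then have "B d d > 0" using B_nonneg[of d] by linarith
    define s where "s = B d d / (\<bar>K\<bar> + 1)"
    have "s > 0" unfolding s_def using \<open>B d d > 0\<close> by simp
    then have "2 * B d d \<le> s * K" using quad[of s] by (simp add: power2_eq_square)
    also have "\<dots> \<le> s * \<bar>K\<bar>" using \<open>s > 0\<close> by simp
    also have "\<dots> < B d d" unfolding s_def using \<open>B d d > 0\<close> by (simp add: field_simps)
    finally show False using \<open>B d d > 0\<close> by simp
  qed
  then show ?thesis unfolding d_def by simp
qed

lemma max_eigenvector:
  assumes "subspace W" and "symmetric_on W S" and "x \<in> W" and "x \<noteq> 0"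
  obtains e l where "e \<in> W" and "e \<noteq> 0" and "S e = l *\<^sub>R e" and "\<forall>w\<in>W. B (S w) w \<le> l * B w w"
proof -
  have "linear S" using assms(2) unfolding symmetric_on_def by blast
  obtain e where "e \<in> W" "e \<noteq> 0" and max: "\<forall>w\<in>W. B (S w) w \<le> (B (S e) e / B e e) * B w w"
    using rayleigh_max_attained[OF assms(1) \<open>linear S\<close> assms(3,4)] by blast
  moreover have "B (S e) e = (B (S e) e / B e e) * B e e"
    using B_pos[OF \<open>e \<noteq> 0\<close>] by (simp del: B_self_eq_0_iff)
  ultimately show ?thesis
    using that rayleigh_maximizer_eigenvector[OF assms(1,2)] by blast
qed

lemma symmetric_on_orthogonal:
  assumes "symmetric_on W S" and "subspace W" and "e \<in> W" and "S e = l *\<^sub>R e"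
  shows "subspace {w\<in>W. B w e = 0}" and "symmetric_on {w\<in>W. B w e = 0} S"
proof -
  show "subspace {w\<in>W. B w e = 0}"
    using assms(2) unfolding subspace_def by (auto simp: B_simps)
  have "S x \<in> W \<and> B (S x) e = 0" if "x \<in> W" and "B x e = 0" for x
  proof -
    have "B (S x) e = B x (S e)" using assms(1,3) that(1) unfolding symmetric_on_def by blast
    then show ?thesis using assms(1,4) that unfolding symmetric_on_def by (simp add: B_simps)
  qed
  then show "symmetric_on {w\<in>W. B w e = 0} S"
    by (intro symmetric_on_subset[OF assms(1)]) auto
qed

lemma eigenvectors_span:
  assumes "subspace W" and "symmetric_on W S"
  shows "W \<subseteq> span {e\<in>W. \<exists>c. S e = c *\<^sub>R e}"
  using assms
proof (induction "dim W" arbitrary: W rule: less_induct)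
  case less
  show ?case
  proof (cases "\<exists>x\<in>W. x \<noteq> 0")
    case False
    then show ?thesis by (auto simp: span_zero)
  next
    case True
    then obtain e l where "e \<in> W" "e \<noteq> 0" "S e = l *\<^sub>R e"
      using max_eigenvector[OF less.prems] by blast
    define W' where "W' = {w\<in>W. B w e = 0}"
    have "subspace W'" and "symmetric_on W' S"
      unfolding W'_def using symmetric_on_orthogonal[OF less.prems(2,1) \<open>e \<in> W\<close> \<open>S e = l *\<^sub>R e\<close>] by auto
    moreover have "dim W' < dim W"
      using \<open>subspace W'\<close> less.prems(1) \<open>e \<in> W\<close> \<open>e \<noteq> 0\<close>
      by (intro dim_less_subspace[of _ _ e]) (auto simp: W'_def)
    ultimately have "W' \<subseteq> span {e\<in>W'. \<exists>c. S e = c *\<^sub>R e}"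
      using less.hyps by blast
    also have "\<dots> \<subseteq> span {e\<in>W. \<exists>c. S e = c *\<^sub>R e}"
      by (rule span_mono) (auto simp: W'_def)
    finally have IH: "W' \<subseteq> span {e\<in>W. \<exists>c. S e = c *\<^sub>R e}" .
    show ?thesis
    proof
      fix w assume "w \<in> W"
      define a where "a = B w e / B e e"
      have "w - a *\<^sub>R e \<in> W'"
        unfolding W'_def a_def using \<open>w \<in> W\<close> \<open>e \<in> W\<close> less.prems(1) B_pos[OF \<open>e \<noteq> 0\<close>]
        by (simp add: B_simps subspace_diff subspace_scale)
      then have "w - a *\<^sub>R e \<in> span {e\<in>W. \<exists>c. S e = c *\<^sub>R e}" using IH by blast
      moreover have "e \<in> span {e\<in>W. \<exists>c. S e = c *\<^sub>R e}"
        using \<open>e \<in> W\<close> \<open>S e = l *\<^sub>R e\<close> by (intro span_base) blast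
      ultimately have "(w - a *\<^sub>R e) + a *\<^sub>R e \<in> span {e\<in>W. \<exists>c. S e = c *\<^sub>R e}"
        by (intro span_add span_scale)
      then show "w \<in> span {e\<in>W. \<exists>c. S e = c *\<^sub>R e}" by simp
    qed
  qed
qed

lemma eigenvector_induct:
  assumes "subspace W" and "symmetric_on W S" and "subspace V"
    and "\<And>e c. e \<in> W \<Longrightarrow> S e = c *\<^sub>R e \<Longrightarrow> e \<in> V"
  shows "W \<subseteq> V"
proof -
  have "span {e\<in>W. \<exists>c. S e = c *\<^sub>R e} \<subseteq> V"
    by (rule span_minimal) (use assms(3,4) in auto)
  with eigenvectors_span[OF assms(1,2)] show ?thesis by blast
qed

lemma symmetric_on_eigenspace:
  assumes "symmetric_on W T" and "\<forall>x\<in>W. S (T x) = T (S x)"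
  shows "symmetric_on {x\<in>W. S x = l *\<^sub>R x} T"
proof (rule symmetric_on_subset[OF assms(1)])
  have "linear T" and "\<forall>x\<in>W. T x \<in> W" using assms(1) unfolding symmetric_on_def by auto
  then show "\<forall>x\<in>{x\<in>W. S x = l *\<^sub>R x}. T x \<in> {x\<in>W. S x = l *\<^sub>R x}"
    using assms(2) by (simp add: linear_scale)
qed auto

lemma common_eigenvector:
  assumes "subspace W" and "\<forall>S\<in>F. symmetric_on W S"
    and "\<forall>S\<in>F. \<forall>T\<in>F. \<forall>x\<in>W. S (T x) = T (S x)" and "x \<in> W" and "x \<noteq> 0"
  shows "\<exists>v\<in>W. v \<noteq> 0 \<and> (\<forall>S\<in>F. \<exists>c. S v = c *\<^sub>R v)"
  using assms
proof (induction "dim W" arbitrary: W x rule: less_induct)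
  case less
  show ?case
  proof (cases "\<forall>S\<in>F. \<exists>c. \<forall>x\<in>W. S x = c *\<^sub>R x")
    case True
    then show ?thesis using less.prems(4,5) by blast
  next
    case False
    then obtain S where "S \<in> F" and ns: "\<forall>c. \<exists>x\<in>W. S x \<noteq> c *\<^sub>R x" by blast
    then have "symmetric_on W S" using less.prems(2) by blast
    then obtain e l where "e \<in> W" "e \<noteq> 0" "S e = l *\<^sub>R e"
      using max_eigenvector[OF less.prems(1) _ less.prems(4,5)] by blast
    have "linear S" using \<open>symmetric_on W S\<close> unfolding symmetric_on_def by blast
    define V where "V = {x\<in>W. S x = l *\<^sub>R x}"
    have "subspace V" using less.prems(1) \<open>linear S\<close> unfolding V_def subspace_def
      by (auto simp: linear_add linear_scale linear_0 scaleR_add_right)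
    obtain y where "y \<in> W" and "S y \<noteq> l *\<^sub>R y" using ns by blast
    then have "dim V < dim W"
      using dim_less_subspace[OF \<open>subspace V\<close> less.prems(1)] by (auto simp: V_def)
    have "\<forall>T\<in>F. symmetric_on V T"
      using symmetric_on_eigenspace less.prems(2,3) \<open>S \<in> F\<close> unfolding V_def by blast
    moreover have "\<forall>S\<in>F. \<forall>T\<in>F. \<forall>x\<in>V. S (T x) = T (S x)"
      using less.prems(3) unfolding V_def by blast
    moreover have "e \<in> V" using \<open>e \<in> W\<close> \<open>S e = l *\<^sub>R e\<close> unfolding V_def by blast
    ultimately have "\<exists>v\<in>V. v \<noteq> 0 \<and> (\<forall>S\<in>F. \<exists>c. S v = c *\<^sub>R v)"
      using less.hyps[OF \<open>dim V < dim W\<close> \<open>subspace V\<close>] \<open>e \<noteq> 0\<close> by blast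
    then show ?thesis unfolding V_def by blast
  qed
qed

end

section \<open>Lie algebras and the Killing form\<close>

locale lie_algebra =
  fixes br :: "'g::euclidean_space \<Rightarrow> 'g \<Rightarrow> 'g"
  assumes lie_bracket: "lie_bracket br"
begin

lemma linear_br_right: "linear (br x)"
  using lie_bracket unfolding lie_bracket_def by blast

lemma linear_br_left: "linear (\<lambda>x. br x y)"
  using lie_bracket unfolding lie_bracket_def by blast

lemmas br_simps =
  linear_add[OF linear_br_right] linear_diff[OF linear_br_right] linear_scale[OF linear_br_right]
  linear_neg[OF linear_br_right] linear_0[OF linear_br_right]
  linear_add[OF linear_br_left] linear_diff[OF linear_br_left] linear_scale[OF linear_br_left]
  linear_neg[OF linear_br_left] linear_0[OF linear_br_left]

lemma br_self: "br x x = 0"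
  using lie_bracket unfolding lie_bracket_def by blast

lemma br_anticomm: "br x y = - br y x"
proof -
  have "br (x + y) (x + y) = br x x + br x y + (br y x + br y y)" by (simp add: br_simps)
  then have "br x y + br y x = 0" by (simp add: br_self)
  then show ?thesis by (simp add: eq_neg_iff_add_eq_0)
qed

lemma br_derivation: "br x (br y z) = br (br x y) z + br y (br x z)"
proof -
  have "br x (br y z) + br y (br z x) + br z (br x y) = 0"
    using lie_bracket unfolding lie_bracket_def by blast
  moreover have "br y (br z x) = - br y (br x z)"
    by (metis br_anticomm linear_neg[OF linear_br_right])
  moreover have "br z (br x y) = - br (br x y) z" by (rule br_anticomm)
  ultimately show ?thesis by (simp add: algebra_simps eq_neg_iff_add_eq_0)
qed

lemma br_commutator: "br (br x y) w = br x (br y w) - br y (br x w)"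
  using br_derivation[of x y w] by (simp add: algebra_simps)

lemma killing_commute: "killing br X Z = killing br Z X"
  unfolding killing_def by (rule lin_trace_comp_commute[OF linear_br_right linear_br_right])

lemma killing_add_left: "killing br (X + X') Z = killing br X Z + killing br X' Z"
  unfolding killing_def by (simp add: br_simps lin_trace_add)

lemma killing_scale_left: "killing br (c *\<^sub>R X) Z = c * killing br X Z"
  unfolding killing_def by (simp add: br_simps lin_trace_scale)

lemma killing_add_right: "killing br Z (X + X') = killing br Z X + killing br Z X'"
  by (metis killing_add_left killing_commute)

lemma killing_scale_right: "killing br Z (c *\<^sub>R X) = c * killing br Z X"
  by (metis killing_scale_left killing_commute)

lemma killing_invariant: "killing br (br X Z) W = killing br X (br Z W)"
proof -
  have lin: "linear (\<lambda>w. br a (br b w))" for a b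
    using linear_compose[OF linear_br_right linear_br_right] by (simp add: o_def)
  have "killing br (br X Z) W
      = lin_trace (\<lambda>w. br X (br Z (br W w))) - lin_trace (\<lambda>w. br Z (br X (br W w)))"
    unfolding killing_def by (simp add: br_commutator lin_trace_diff)
  also have "lin_trace (\<lambda>w. br Z (br X (br W w))) = lin_trace (\<lambda>w. br X (br W (br Z w)))"
    using lin_trace_comp_commute[OF linear_br_right lin] by simp
  also have "lin_trace (\<lambda>w. br X (br Z (br W w))) - lin_trace (\<lambda>w. br X (br W (br Z w)))
      = killing br X (br Z W)"
    unfolding killing_def by (simp add: br_commutator br_simps lin_trace_diff)
  finally show ?thesis .
qed

lemma killing_lie_aut:
  assumes "lie_aut br \<phi>"
  shows "killing br (\<phi> X) (\<phi> Z) = killing br X Z"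
proof -
  have lin: "linear \<phi>" and "bij \<phi>" and hom: "\<And>x y. \<phi> (br x y) = br (\<phi> x) (\<phi> y)"
    using assms unfolding lie_aut_def by auto
  define \<psi> where "\<psi> = inv \<phi>"
  have lin_inv: "linear \<psi>"
    unfolding \<psi>_def using lin \<open>bij \<phi>\<close> by (simp add: bij_is_inj inj_linear_imp_inv_linear)
  have \<phi>\<psi>: "\<phi> (\<psi> w) = w" and \<psi>\<phi>: "\<psi> (\<phi> w) = w" for w
    unfolding \<psi>_def using \<open>bij \<phi>\<close> by (simp_all add: bij_is_surj surj_f_inv_f bij_is_inj)
  have "br (\<phi> X) (br (\<phi> Z) w) = \<phi> (br X (br Z (\<psi> w)))" for w
    by (metis hom \<phi>\<psi>)
  then have "killing br (\<phi> X) (\<phi> Z) = lin_trace (\<lambda>w. \<phi> (br X (br Z (\<psi> w))))"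
    unfolding killing_def by simp
  also have "\<dots> = lin_trace (\<lambda>w. br X (br Z (\<psi> (\<phi> w))))"
    using lin_trace_comp_commute[OF lin, of "\<lambda>w. br X (br Z (\<psi> w))"]
      linear_compose[OF lin_inv linear_compose[OF linear_br_right linear_br_right]]
    by (simp add: o_def)
  finally show ?thesis unfolding killing_def \<psi>\<phi> .
qed

text \<open>In other words \<open>(ad(Y)\<^sup>2 + (\<mu> + \<nu>)\<^sup>2) (ad(Y)\<^sup>2 + (\<mu> - \<nu>)\<^sup>2) [v, a] = 0\<close>.\<close>
lemma br_ad_eigenvectors:
  assumes v: "br Y (br Y v) = - (\<mu>\<^sup>2) *\<^sub>R v" and a: "br Y (br Y a) = - (\<nu>\<^sup>2) *\<^sub>R a"
  defines "z \<equiv> (- (2 * \<mu> * \<nu>)) *\<^sub>R br v a + 2 *\<^sub>R br (br Y v) (br Y a)"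
  shows "br Y (br Y (br v a)) + ((\<mu> - \<nu>)\<^sup>2) *\<^sub>R br v a = z"
    and "br Y (br Y z) + ((\<mu> + \<nu>)\<^sup>2) *\<^sub>R z = 0"
proof -
  define u where "u = br v a"
  define u1 where "u1 = br (br Y v) a"
  define u2 where "u2 = br v (br Y a)"
  define u3 where "u3 = br (br Y v) (br Y a)"
  have D: "br Y (p *\<^sub>R x + q *\<^sub>R y) = p *\<^sub>R br Y x + q *\<^sub>R br Y y" for p q x y
    by (simp add: br_simps)
  have Du: "br Y u = 1 *\<^sub>R u1 + 1 *\<^sub>R u2"
    unfolding u_def u1_def u2_def using br_derivation[of Y v a] by simp
  have Du1: "br Y u1 = - (\<mu>\<^sup>2) *\<^sub>R u + 1 *\<^sub>R u3"
    unfolding u_def u1_def u3_def by (simp add: br_derivation[of Y "br Y v" a] v br_simps)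
  have Du2: "br Y u2 = - (\<nu>\<^sup>2) *\<^sub>R u + 1 *\<^sub>R u3"
    unfolding u_def u2_def u3_def by (simp add: br_derivation[of Y v "br Y a"] a br_simps)
  have Du3: "br Y u3 = - (\<nu>\<^sup>2) *\<^sub>R u1 + - (\<mu>\<^sup>2) *\<^sub>R u2"
    unfolding u1_def u2_def u3_def
    by (simp add: br_derivation[of Y "br Y v" "br Y a"] v a br_simps add.commute)
  have z: "z = - (2 * \<mu> * \<nu>) *\<^sub>R u + 2 *\<^sub>R u3"
    unfolding z_def u_def u3_def ..
  have "br Y (br Y u) + ((\<mu> - \<nu>)\<^sup>2) *\<^sub>R u
      = ((1 * - (\<mu>\<^sup>2) + 1 * - (\<nu>\<^sup>2)) + (\<mu> - \<nu>)\<^sup>2) *\<^sub>R u + ((1 * 1 + 1 * 1) + 0) *\<^sub>R u3"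
    unfolding Du D Du1 Du2 lincomb_scale lincomb_add
    using lincomb_add[of _ u _ u3 "(\<mu> - \<nu>)\<^sup>2" 0] by simp
  also have "\<dots> = z"
    unfolding z by (rule lincomb_eq) (simp_all add: power2_eq_square algebra_simps)
  finally show "br Y (br Y (br v a)) + ((\<mu> - \<nu>)\<^sup>2) *\<^sub>R br v a = z"
    unfolding u_def .
  define p1 where "p1 = - (2 * \<mu> * \<nu>) * 1 + 2 * - (\<nu>\<^sup>2)"
  define p2 where "p2 = - (2 * \<mu> * \<nu>) * 1 + 2 * - (\<mu>\<^sup>2)"
  have Dz: "br Y z = p1 *\<^sub>R u1 + p2 *\<^sub>R u2"
    unfolding z D Du Du3 lincomb_scale lincomb_add p1_def p2_def ..
  have "br Y (br Y z) + ((\<mu> + \<nu>)\<^sup>2) *\<^sub>R z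
      = ((p1 * - (\<mu>\<^sup>2) + p2 * - (\<nu>\<^sup>2)) + (\<mu> + \<nu>)\<^sup>2 * - (2 * \<mu> * \<nu>)) *\<^sub>R u
        + ((p1 * 1 + p2 * 1) + (\<mu> + \<nu>)\<^sup>2 * 2) *\<^sub>R u3"
    unfolding Dz D Du1 Du2 lincomb_scale lincomb_add
    by (subst z) (simp only: lincomb_scale lincomb_add)
  also have "\<dots> = 0 *\<^sub>R u + 0 *\<^sub>R u3"
    unfolding p1_def p2_def by (rule lincomb_eq) (simp_all add: power2_eq_square algebra_simps)
  finally show "br Y (br Y z) + ((\<mu> + \<nu>)\<^sup>2) *\<^sub>R z = 0" by simp
qed

lemma linear_exp_ad_br: "linear (exp_ad br Z)"
  by (rule linear_exp_ad[OF linear_br_right])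

lemma exp_ad_zero: "exp_ad br 0 x = x"
  by (rule exp_ad_eq_self[OF linear_br_right]) (simp add: br_simps)

end

section \<open>Cartan involutions and \<open>exp(ad Y)\<close> for \<open>Y \<in> \<kk>\<close>\<close>

locale cartan_algebra = lie_algebra br for br :: "'g::euclidean_space \<Rightarrow> 'g \<Rightarrow> 'g" +
  fixes \<theta> :: "'g \<Rightarrow> 'g"
  assumes cartan: "cartan_involution br \<theta>"
begin

lemma theta_lie_aut: "lie_aut br \<theta>"
  using cartan unfolding cartan_involution_def lie_involution_def by blast

lemma linear_theta: "linear \<theta>"
  using theta_lie_aut unfolding lie_aut_def by blast

lemma theta_br: "\<theta> (br x y) = br (\<theta> x) (\<theta> y)"
  using theta_lie_aut unfolding lie_aut_def by blast

lemma theta_theta [simp]: "\<theta> (\<theta> x) = x"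
  using cartan unfolding cartan_involution_def lie_involution_def by blast

lemmas theta_simps =
  linear_add[OF linear_theta] linear_diff[OF linear_theta] linear_scale[OF linear_theta]
  linear_neg[OF linear_theta] linear_0[OF linear_theta]

definition B\<theta> :: "'g \<Rightarrow> 'g \<Rightarrow> real" where
  "B\<theta> X Z = - killing br X (\<theta> Z)"

sublocale B\<theta>: pos_form B\<theta>
proof (rule pos_form.intro)
  fix X Z
  show "linear (\<lambda>X. B\<theta> X Z)"
    unfolding B\<theta>_def by (rule linearI) (simp_all add: killing_add_left killing_scale_left)
  show "linear (B\<theta> X)"
    unfolding B\<theta>_def by (rule linearI) (simp_all add: theta_simps killing_add_right killing_scale_right)
  show "B\<theta> X Z = B\<theta> Z X"
    using killing_lie_aut[OF theta_lie_aut, of X "\<theta> Z"] unfolding B\<theta>_def by (simp add: killing_commute)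
  show "X \<noteq> 0 \<Longrightarrow> B\<theta> X X > 0"
    using cartan unfolding cartan_involution_def B\<theta>_def by blast
qed

lemma theta_exp_ad:
  assumes "\<theta> Z = Z"
  shows "\<theta> (exp_ad br Z x) = exp_ad br Z (\<theta> x)"
  by (rule exp_ad_intertwine[OF linear_br_right linear_br_right linear_theta])
    (simp add: theta_br assms)

lemma B\<theta>_ad_skew:
  assumes "\<theta> Z = Z"
  shows "B\<theta> (br Z X) W = - B\<theta> X (br Z W)"
proof -
  have "killing br (br Z X) (\<theta> W) = - killing br (br X Z) (\<theta> W)"
    using killing_scale_left[of "-1" "br X Z"] br_anticomm[of Z X] by simp
  then show ?thesis
    unfolding B\<theta>_def using assms by (simp add: killing_invariant theta_br)
qed

lemma compact_if_theta_id:
  assumes "\<And>X. \<theta> X = X"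
  shows "lie_compact br"
  using cartan assms unfolding lie_compact_def cartan_involution_def by fastforce

lemma lie_ideal_k_centralizer_m:
  "lie_ideal br {X. \<theta> X = X \<and> (\<forall>A. \<theta> A = - A \<longrightarrow> br X A = 0)}"
  (is "lie_ideal br ?J")
proof -
  have "br x y \<in> ?J" if "y \<in> ?J" for x y
  proof -
    obtain xk xm where x: "x = xk + xm" and "\<theta> xk = xk" and "\<theta> xm = - xm"
      using involution_split[OF linear_theta theta_theta] by blast
    have "\<theta> y = y" and yc: "\<And>A. \<theta> A = - A \<Longrightarrow> br y A = 0" using that by auto
    have "br x y = br xk y"
      using yc[OF \<open>\<theta> xm = - xm\<close>] br_anticomm[of xm y] by (simp add: x br_simps)
    moreover have "\<theta> (br xk y) = br xk y" by (simp add: theta_br \<open>\<theta> xk = xk\<close> \<open>\<theta> y = y\<close>)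
    moreover have "br (br xk y) A = 0" if "\<theta> A = - A" for A
    proof -
      have "\<theta> (br xk A) = - br xk A" using that by (simp add: theta_br \<open>\<theta> xk = xk\<close> br_simps)
      then show ?thesis by (simp add: br_commutator yc[OF that] yc br_simps)
    qed
    ultimately show ?thesis by simp
  qed
  moreover have "subspace ?J"
    unfolding subspace_def by (auto simp: theta_simps br_simps)
  ultimately show ?thesis unfolding lie_ideal_def by blast
qed

end

locale cartan_element = cartan_algebra br \<theta>
  for br :: "'g::euclidean_space \<Rightarrow> 'g \<Rightarrow> 'g" and \<theta> +
  fixes Y :: 'g
  assumes theta_Y: "\<theta> Y = Y"
begin

abbreviation Ad :: "'g \<Rightarrow> 'g" where "Ad \<equiv> exp_ad br Y"
abbreviation Ad_inv :: "'g \<Rightarrow> 'g" where "Ad_inv \<equiv> exp_ad br (- Y)"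

definition negsq :: "'g \<Rightarrow> 'g" where
  "negsq x = - br Y (br Y x)"

lemma linear_negsq: "linear negsq"
  unfolding negsq_def by (rule linearI) (simp_all add: br_simps)

lemma theta_negsq: "\<theta> (negsq x) = negsq (\<theta> x)"
  unfolding negsq_def by (simp add: theta_br theta_simps theta_Y)

lemma negsq_exp_ad:
  assumes "br Y Z = 0"
  shows "exp_ad br Z (negsq x) = negsq (exp_ad br Z x)"
proof (rule exp_ad_intertwine[OF linear_br_right linear_br_right linear_negsq, symmetric])
  have "br Y (br Z x) = br Z (br Y x)" for x
    using br_derivation[of Y Z x] assms by (simp add: br_simps)
  then show "negsq (br Z x) = br Z (negsq x)" for x
    unfolding negsq_def by (simp add: br_simps)
qed

lemma Ad_inv_negsq: "Ad_inv (negsq x) = negsq (Ad_inv x)"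
  by (rule negsq_exp_ad) (simp add: br_simps br_self)

lemma B\<theta>_ad_Y_skew: "B\<theta> (br Y X) W = - B\<theta> X (br Y W)"
  by (rule B\<theta>_ad_skew[OF theta_Y])

lemma B\<theta>_ad_Y_self: "B\<theta> (br Y X) X = 0"
  using B\<theta>_ad_Y_skew[of X X] B\<theta>.B_commute[of "br Y X" X] by simp

lemma B\<theta>_negsq: "B\<theta> (negsq X) X = B\<theta> (br Y X) (br Y X)"
  unfolding negsq_def using B\<theta>_ad_Y_skew[of "br Y X" X] by (simp add: B\<theta>.B_simps)

lemma symmetric_on_negsq:
  assumes "\<forall>x\<in>W. negsq x \<in> W"
  shows "B\<theta>.symmetric_on W negsq"
  unfolding B\<theta>.symmetric_on_def
  using assms linear_negsq B\<theta>_ad_Y_skew by (simp add: negsq_def B\<theta>.B_simps)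

lemma negsq_eigenvector:
  assumes "negsq e = c *\<^sub>R e" and "e \<noteq> 0"
  shows "c * B\<theta> e e = B\<theta> (br Y e) (br Y e)" and "c \<ge> 0"
    and "br Y (br Y e) = - ((sqrt c)\<^sup>2) *\<^sub>R e"
proof -
  show "c * B\<theta> e e = B\<theta> (br Y e) (br Y e)"
    using B\<theta>_negsq[of e] assms(1) by (simp add: B\<theta>.B_simps)
  then have "0 \<le> c * B\<theta> e e" using B\<theta>.B_nonneg[of "br Y e"] by simp
  then show "c \<ge> 0" using B\<theta>.B_pos[OF assms(2)] by (simp add: zero_le_mult_iff)
  then show "br Y (br Y e) = - ((sqrt c)\<^sup>2) *\<^sub>R e"
    using assms(1) unfolding negsq_def by (simp add: minus_equation_iff)
qed

lemma ad_Y_eq_0_if_ad_Y_sq_eq_0: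
  assumes "br Y (br Y e) = 0"
  shows "br Y e = 0"
  using B\<theta>_negsq[of e] assms unfolding negsq_def by (simp add: B\<theta>.B_simps)

lemma exp_ad_eigenvector:
  assumes "br Y (br Y e) = - (\<mu>\<^sup>2) *\<^sub>R e" and "\<mu> \<noteq> 0"
  shows "exp_ad br (c *\<^sub>R Y) e = cos (c * \<mu>) *\<^sub>R e + (sin (c * \<mu>) / \<mu>) *\<^sub>R br Y e"
proof (cases "c = 0")
  case True
  then show ?thesis by (simp add: exp_ad_zero)
next
  case False
  have "exp_ad br (c *\<^sub>R Y) e
      = cos (c * \<mu>) *\<^sub>R e + (sin (c * \<mu>) / (c * \<mu>)) *\<^sub>R (c *\<^sub>R br Y e)"
    using assms False
    by (intro exp_ad_rotation[OF linear_br_right]) (simp_all add: br_simps power2_eq_square)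
  then show ?thesis using False by simp
qed

lemma exp_ad_add_eigenvector:
  assumes e: "br Y (br Y e) = - (\<mu>\<^sup>2) *\<^sub>R e"
  shows "exp_ad br (a *\<^sub>R Y) (exp_ad br (b *\<^sub>R Y) e) = exp_ad br ((a + b) *\<^sub>R Y) e"
proof (cases "\<mu> = 0")
  case True
  then have "br Y e = 0" using e ad_Y_eq_0_if_ad_Y_sq_eq_0 by simp
  then have "exp_ad br (c *\<^sub>R Y) e = e" for c
    by (intro exp_ad_eq_self[OF linear_br_right]) (simp add: br_simps)
  then show ?thesis by simp
next
  case False
  define s where "s c = sin (c * \<mu>) / \<mu>" for c
  have exp_e: "exp_ad br (c *\<^sub>R Y) e = cos (c * \<mu>) *\<^sub>R e + s c *\<^sub>R br Y e" for c
    unfolding s_def by (rule exp_ad_eigenvector[OF e False])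
  have "br Y (br Y (br Y e)) = - (\<mu>\<^sup>2) *\<^sub>R br Y e"
    using e by (simp add: br_simps)
  then have exp_De: "exp_ad br (c *\<^sub>R Y) (br Y e) = (- (\<mu>\<^sup>2 * s c)) *\<^sub>R e + cos (c * \<mu>) *\<^sub>R br Y e"
    for c unfolding s_def by (simp add: exp_ad_eigenvector[OF _ False] e)
  have "exp_ad br (a *\<^sub>R Y) (exp_ad br (b *\<^sub>R Y) e)
      = (cos (b * \<mu>) * cos (a * \<mu>) + s b * - (\<mu>\<^sup>2 * s a)) *\<^sub>R e
        + (cos (b * \<mu>) * s a + s b * cos (a * \<mu>)) *\<^sub>R br Y e"
    unfolding exp_e[of b] linear_lincomb[OF linear_exp_ad_br] exp_e[of a] exp_De
      lincomb_scale lincomb_add ..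
  also have "\<dots> = exp_ad br ((a + b) *\<^sub>R Y) e"
    unfolding exp_e s_def using False
    by (intro lincomb_eq) (simp_all add: distrib_right cos_add sin_add power2_eq_square field_simps)
  finally show ?thesis .
qed

text \<open>This holds in every Lie algebra; here it follows by diagonalising \<open>ad(Y)\<^sup>2\<close>.\<close>
lemma exp_ad_add: "exp_ad br (a *\<^sub>R Y) (exp_ad br (b *\<^sub>R Y) x) = exp_ad br ((a + b) *\<^sub>R Y) x"
proof -
  have "UNIV \<subseteq> {x. exp_ad br (a *\<^sub>R Y) (exp_ad br (b *\<^sub>R Y) x) = exp_ad br ((a + b) *\<^sub>R Y) x}"
  proof (rule B\<theta>.eigenvector_induct[OF subspace_UNIV symmetric_on_negsq])
    show "subspace {x. exp_ad br (a *\<^sub>R Y) (exp_ad br (b *\<^sub>R Y) x) = exp_ad br ((a + b) *\<^sub>R Y) x}"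
      using linear_exp_ad_br unfolding subspace_def by (auto simp: linear_add linear_scale linear_0)
    show "e \<in> {x. exp_ad br (a *\<^sub>R Y) (exp_ad br (b *\<^sub>R Y) x) = exp_ad br ((a + b) *\<^sub>R Y) x}"
      if "negsq e = c *\<^sub>R e" for e c
      using that negsq_eigenvector(3) exp_ad_add_eigenvector
      by (cases "e = 0") (auto simp: linear_0[OF linear_exp_ad_br])
  qed simp
  then show ?thesis by blast
qed

lemma Ad_Ad_inv: "Ad (Ad_inv x) = x" and Ad_inv_Ad: "Ad_inv (Ad x) = x"
  using exp_ad_add[of 1 "-1" x] exp_ad_add[of "-1" 1 x] by (simp_all add: exp_ad_zero)

lemma Ad_inv_Ad_inv: "Ad_inv (Ad_inv x) = exp_ad br ((- 2) *\<^sub>R Y) x"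
  using exp_ad_add[of "-1" "-1" x] by simp

lemma linear_Ad_inv_Ad_inv: "linear (\<lambda>w. Ad_inv (Ad_inv w))"
  using linear_compose[OF linear_exp_ad_br[of "- Y"] linear_exp_ad_br[of "- Y"]] by (simp add: o_def)

lemma B\<theta>_exp_ad_eigenvector:
  assumes e: "br Y (br Y e) = - (\<mu>\<^sup>2) *\<^sub>R e"
  shows "B\<theta> (exp_ad br (c *\<^sub>R Y) e) e = cos (c * \<mu>) * B\<theta> e e"
proof (cases "\<mu> = 0")
  case True
  then have "br Y e = 0" using e ad_Y_eq_0_if_ad_Y_sq_eq_0 by simp
  then have "exp_ad br (c *\<^sub>R Y) e = e"
    by (intro exp_ad_eq_self[OF linear_br_right]) (simp add: br_simps)
  then show ?thesis using True by simp
next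
  case False
  then show ?thesis
    by (simp add: exp_ad_eigenvector[OF e False] B\<theta>.B_simps B\<theta>_ad_Y_self)
qed

text \<open>On the plane spanned by an eigenvector \<open>e\<close> of \<open>-ad(Y)\<^sup>2\<close> with eigenvalue \<open>\<mu>\<^sup>2\<close> and by
  \<open>[Y, e]\<close>, \<open>exp(-2 ad Y)\<close> is the rotation by the angle \<open>2\<mu>\<close>.\<close>
lemma Ad_inv_sq_fixed_eigenvector_angle:
  assumes e: "br Y (br Y e) = - (\<mu>\<^sup>2) *\<^sub>R e" and "e \<noteq> 0" and "\<mu> > 0"
    and "Ad_inv (Ad_inv e) = e"
  shows "\<mu> \<ge> pi"
proof -
  have "cos (- 2 * \<mu>) * B\<theta> e e = B\<theta> e e"
    using B\<theta>_exp_ad_eigenvector[OF e, of "- 2"] assms(4) by (simp add: Ad_inv_Ad_inv)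
  then have "cos (2 * \<mu>) = 1" using \<open>e \<noteq> 0\<close> by simp
  then obtain n :: int where n: "2 * \<mu> = real_of_int n * 2 * pi" using cos_one_2pi_int by blast
  then have "n > 0" using \<open>\<mu> > 0\<close> pi_gt_zero by (smt (verit) mult_nonpos_nonneg of_int_le_0_iff)
  then show ?thesis using n pi_gt_zero by (simp add: mult_le_cancel_right1)
qed

lemma Ad_inv_sq_antifixed_eigenvector_angle:
  assumes e: "br Y (br Y e) = - (\<mu>\<^sup>2) *\<^sub>R e" and "e \<noteq> 0" and "\<mu> \<ge> 0"
    and "Ad_inv (Ad_inv e) = - e"
  shows "\<mu> \<ge> pi / 2"
proof (rule ccontr)
  assume "\<not> \<mu> \<ge> pi / 2"
  then have "cos pi < cos (2 * \<mu>)" using \<open>\<mu> \<ge> 0\<close> by (intro cos_monotone_0_pi) auto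
  moreover have "cos (- 2 * \<mu>) * B\<theta> e e = - B\<theta> e e"
    using B\<theta>_exp_ad_eigenvector[OF e, of "- 2"] assms(4) by (simp add: Ad_inv_Ad_inv B\<theta>.B_simps)
  then have "(cos (2 * \<mu>) + 1) * B\<theta> e e = 0" by (simp add: distrib_right)
  then have "cos (2 * \<mu>) = - 1" using \<open>e \<noteq> 0\<close> by simp
  ultimately show False by simp
qed

end

text \<open>The bound on \<open>\<mm>\<close> says that all eigenvalues of \<open>-ad(Y)\<^sup>2\<close> there are below \<open>(\<pi>/2)\<^sup>2\<close>;
  for \<open>Y \<in> \<tt>\<^sup>+\<close> it comes from the roots in \<open>\<Sigma>(\<mm>\<^sub>\<complex>, \<tt>)\<close>.\<close>
locale small_element = cartan_element br \<theta> Y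
  for br :: "'g::euclidean_space \<Rightarrow> 'g \<Rightarrow> 'g" and \<theta> Y +
  fixes \<kappa> :: real
  assumes kappa_less: "\<kappa> < (pi / 2)\<^sup>2"
    and ad_Y_bound_m: "\<theta> w = - w \<Longrightarrow> B\<theta> (br Y w) (br Y w) \<le> \<kappa> * B\<theta> w w"
begin

lemma negsq_eigenvalue_m_le:
  assumes "\<theta> e = - e" and "negsq e = c *\<^sub>R e" and "e \<noteq> 0"
  shows "c \<le> \<kappa>"
proof -
  have "c * B\<theta> e e \<le> \<kappa> * B\<theta> e e"
    using negsq_eigenvector(1)[OF assms(2,3)] ad_Y_bound_m[OF assms(1)] by simp
  then show ?thesis using B\<theta>.B_pos[OF assms(3)] by (simp add: mult_le_cancel_right)
qed

lemma sqrt_negsq_eigenvalue_m_less: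
  assumes "\<theta> e = - e" and "negsq e = c *\<^sub>R e" and "e \<noteq> 0"
  shows "sqrt c < pi / 2"
proof -
  have "c < (pi / 2)\<^sup>2" using negsq_eigenvalue_m_le[OF assms] kappa_less by simp
  then have "sqrt c < sqrt ((pi / 2)\<^sup>2)" by (rule real_sqrt_less_mono)
  then show ?thesis using pi_gt_zero by simp
qed

lemma ad_Y_sq_m_injective:
  assumes "\<theta> w = - w" and "br Y (br Y w) + c *\<^sub>R w = 0" and "c > \<kappa>"
  shows "w = 0"
proof -
  have "negsq w = c *\<^sub>R w" using assms(2) unfolding negsq_def by (rule minus_unique)
  then have "c * B\<theta> w w \<le> \<kappa> * B\<theta> w w"
    using B\<theta>_negsq[of w] ad_Y_bound_m[OF assms(1)] by (simp add: B\<theta>.B_simps)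
  then have "(c - \<kappa>) * B\<theta> w w \<le> 0" by (simp add: algebra_simps)
  then have "B\<theta> w w \<le> 0" using \<open>c > \<kappa>\<close> by (simp add: mult_le_0_iff)
  then show ?thesis using B\<theta>.B_nonneg[of w] by simp
qed

text \<open>Every rotation angle of \<open>exp(-2 ad Y)\<close> on \<open>\<mm>\<close> is less than \<open>\<pi>\<close>.\<close>
lemma Ad_inv_sq_antifixed_m:
  assumes "\<theta> x = - x" and "Ad_inv (Ad_inv x) = - x"
  shows "x = 0"
proof (rule ccontr)
  assume "x \<noteq> 0"
  define U where "U = eigm1 \<theta> \<inter> eigm1 (\<lambda>w. Ad_inv (Ad_inv w))"
  have "subspace U"
    unfolding U_def by (intro subspace_inter subspace_eigm1 linear_theta linear_Ad_inv_Ad_inv)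
  moreover have "\<forall>w\<in>U. negsq w \<in> U"
    unfolding U_def eigm1_def by (simp add: theta_negsq Ad_inv_negsq linear_neg[OF linear_negsq])
  then have "B\<theta>.symmetric_on U negsq" by (rule symmetric_on_negsq)
  moreover have "x \<in> U" using assms unfolding U_def eigm1_def by blast
  ultimately obtain e c where "e \<in> U" "e \<noteq> 0" "negsq e = c *\<^sub>R e"
    using B\<theta>.max_eigenvector \<open>x \<noteq> 0\<close> by blast
  then have "\<theta> e = - e" and "Ad_inv (Ad_inv e) = - e" unfolding U_def eigm1_def by auto
  then have "sqrt c \<ge> pi / 2"
    using Ad_inv_sq_antifixed_eigenvector_angle[OF negsq_eigenvector(3) \<open>e \<noteq> 0\<close>]
      negsq_eigenvector(2) \<open>e \<noteq> 0\<close> \<open>negsq e = c *\<^sub>R e\<close> by simp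
  then show False
    using sqrt_negsq_eigenvalue_m_less[OF \<open>\<theta> e = - e\<close> \<open>negsq e = c *\<^sub>R e\<close> \<open>e \<noteq> 0\<close>] by simp
qed

text \<open>The bracket lies in \<open>\<mm>\<close>, where \<open>\<kappa>\<close> bounds the eigenvalues of \<open>-ad(Y)\<^sup>2\<close>, but by
  \<open>br_ad_eigenvectors\<close> it is built from eigenvectors with eigenvalues \<open>(\<mu> \<plusminus> \<nu>)\<^sup>2 > \<kappa>\<close>.\<close>
lemma br_k_m_eigenvectors_eq_0:
  assumes "\<theta> v = v" and v: "br Y (br Y v) = - (\<mu>\<^sup>2) *\<^sub>R v" and "\<mu> \<ge> pi"
    and "\<theta> a = - a" and a: "br Y (br Y a) = - (\<nu>\<^sup>2) *\<^sub>R a" and "\<nu> \<ge> 0" and "\<nu> < pi / 2"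
  shows "br v a = 0"
proof -
  define z where "z = (- (2 * \<mu> * \<nu>)) *\<^sub>R br v a + 2 *\<^sub>R br (br Y v) (br Y a)"
  have "\<theta> (br v a) = - br v a" and "\<theta> z = - z"
    unfolding z_def using assms(1,4) by (simp_all add: theta_br theta_simps theta_Y br_simps)
  have "(pi / 2)\<^sup>2 < (\<mu> + \<nu>)\<^sup>2" and "(pi / 2)\<^sup>2 < (\<mu> - \<nu>)\<^sup>2"
    using assms(3,6,7) pi_gt_zero by (simp_all add: power_strict_mono)
  then have "(\<mu> + \<nu>)\<^sup>2 > \<kappa>" and "(\<mu> - \<nu>)\<^sup>2 > \<kappa>" using kappa_less by linarith+
  have "z = 0"
    using ad_Y_sq_m_injective[OF \<open>\<theta> z = - z\<close> br_ad_eigenvectors(2)[OF v a, folded z_def]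
        \<open>(\<mu> + \<nu>)\<^sup>2 > \<kappa>\<close>] .
  then show ?thesis
    using ad_Y_sq_m_injective[OF \<open>\<theta> (br v a) = - br v a\<close> _ \<open>(\<mu> - \<nu>)\<^sup>2 > \<kappa>\<close>]
      br_ad_eigenvectors(1)[OF v a, folded z_def] by simp
qed

lemma k_eigenvector_centralizes_m:
  assumes "\<theta> v = v" and v: "br Y (br Y v) = - (\<mu>\<^sup>2) *\<^sub>R v" and "\<mu> \<ge> pi"
    and "\<theta> A = - A"
  shows "br v A = 0"
proof -
  have m: "subspace {w. \<theta> w = - w}"
    using subspace_eigm1[OF linear_theta] unfolding eigm1_def .
  have "{w. \<theta> w = - w} \<subseteq> {A. br v A = 0}"
  proof (rule B\<theta>.eigenvector_induct[OF m symmetric_on_negsq])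
    show "\<forall>x\<in>{w. \<theta> w = - w}. negsq x \<in> {w. \<theta> w = - w}"
      by (simp add: theta_negsq linear_neg[OF linear_negsq])
    show "subspace {A. br v A = 0}"
      unfolding subspace_def by (auto simp: br_simps)
    show "a \<in> {A. br v A = 0}" if "a \<in> {w. \<theta> w = - w}" and "negsq a = c *\<^sub>R a" for a c
    proof (cases "a = 0")
      case False
      have "\<theta> a = - a" using that(1) by simp
      then have "sqrt c < pi / 2" using sqrt_negsq_eigenvalue_m_less[OF _ that(2) False] by blast
      then show ?thesis
        using br_k_m_eigenvectors_eq_0[OF assms(1) v assms(3) \<open>\<theta> a = - a\<close>
            negsq_eigenvector(3)[OF that(2) False]] negsq_eigenvector(2)[OF that(2) False]
        by simp
    qed (simp add: br_simps)
  qed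
  then show ?thesis using assms(4) by blast
qed

lemma Ad_inv_sq_fixed_k:
  assumes k_centralizer_m: "\<And>e. \<theta> e = e \<Longrightarrow> \<forall>A. \<theta> A = - A \<longrightarrow> br e A = 0 \<Longrightarrow> e = 0"
    and "\<theta> x = x" and "Ad_inv (Ad_inv x) = x"
  shows "br Y x = 0"
proof (rule ccontr)
  assume "br Y x \<noteq> 0"
  define U where "U = eig1 \<theta> \<inter> eig1 (\<lambda>w. Ad_inv (Ad_inv w))"
  have "subspace U"
    unfolding U_def by (intro subspace_inter subspace_eig1 linear_theta linear_Ad_inv_Ad_inv)
  moreover have "\<forall>w\<in>U. negsq w \<in> U"
    unfolding U_def eig1_def by (simp add: theta_negsq Ad_inv_negsq)
  then have "B\<theta>.symmetric_on U negsq" by (rule symmetric_on_negsq)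
  moreover have "x \<in> U" and "x \<noteq> 0"
    using assms \<open>br Y x \<noteq> 0\<close> unfolding U_def eig1_def by (auto simp: br_simps)
  ultimately obtain e l where "e \<in> U" "e \<noteq> 0" "negsq e = l *\<^sub>R e"
    and max: "\<forall>w\<in>U. B\<theta> (negsq w) w \<le> l * B\<theta> w w"
    using B\<theta>.max_eigenvector by blast
  have "0 < B\<theta> (negsq x) x" using B\<theta>_negsq B\<theta>.B_pos \<open>br Y x \<noteq> 0\<close> by simp
  also have "\<dots> \<le> l * B\<theta> x x" using max \<open>x \<in> U\<close> by blast
  finally have "l > 0" using B\<theta>.B_nonneg[of x] by (simp add: zero_less_mult_iff)
  have "\<theta> e = e" and "Ad_inv (Ad_inv e) = e" using \<open>e \<in> U\<close> unfolding U_def eig1_def by auto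
  moreover note e = negsq_eigenvector(3)[OF \<open>negsq e = l *\<^sub>R e\<close> \<open>e \<noteq> 0\<close>]
  ultimately have "sqrt l \<ge> pi"
    using Ad_inv_sq_fixed_eigenvector_angle[OF e \<open>e \<noteq> 0\<close>] \<open>l > 0\<close> by simp
  then have "\<forall>A. \<theta> A = - A \<longrightarrow> br e A = 0"
    using k_eigenvector_centralizes_m[OF \<open>\<theta> e = e\<close> e] by blast
  then show False using k_centralizer_m \<open>\<theta> e = e\<close> \<open>e \<noteq> 0\<close> by blast
qed

lemma Ad_inv_sq_theta_fixed_points:
  assumes k_centralizer_m: "\<And>e. \<theta> e = e \<Longrightarrow> \<forall>A. \<theta> A = - A \<longrightarrow> br e A = 0 \<Longrightarrow> e = 0"
  shows "Ad_inv (Ad_inv (\<theta> X)) = X \<longleftrightarrow> \<theta> X = X \<and> br Y X = 0"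
proof
  assume "\<theta> X = X \<and> br Y X = 0"
  then show "Ad_inv (Ad_inv (\<theta> X)) = X"
    by (simp add: exp_ad_eq_self[OF linear_br_right] br_simps)
next
  assume fixed: "Ad_inv (Ad_inv (\<theta> X)) = X"
  obtain a b where X: "X = a + b" and "\<theta> a = a" and "\<theta> b = - b"
    using involution_split[OF linear_theta theta_theta] by blast
  note Ad_inv_simps = linear_add[OF linear_exp_ad_br] linear_neg[OF linear_exp_ad_br]
    linear_diff[OF linear_exp_ad_br]
  have "\<theta> (Ad_inv (Ad_inv a)) = Ad_inv (Ad_inv a)"
    and "\<theta> (- Ad_inv (Ad_inv b)) = - (- Ad_inv (Ad_inv b))"
    using \<open>\<theta> a = a\<close> \<open>\<theta> b = - b\<close> by (simp_all add: theta_exp_ad theta_simps theta_Y Ad_inv_simps)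
  moreover have "Ad_inv (Ad_inv a) + - Ad_inv (Ad_inv b) = a + b"
    using fixed \<open>\<theta> a = a\<close> \<open>\<theta> b = - b\<close> unfolding X by (simp add: theta_simps Ad_inv_simps)
  ultimately have "Ad_inv (Ad_inv a) = a" and "- Ad_inv (Ad_inv b) = b"
    using involution_split_unique[OF linear_theta _ _ \<open>\<theta> a = a\<close> \<open>\<theta> b = - b\<close>] by blast+
  then have "b = 0" and "br Y a = 0"
    using Ad_inv_sq_antifixed_m[OF \<open>\<theta> b = - b\<close>] Ad_inv_sq_fixed_k[OF k_centralizer_m \<open>\<theta> a = a\<close>]
    by (auto simp: minus_equation_iff)
  then show "\<theta> X = X \<and> br Y X = 0" using X \<open>\<theta> a = a\<close> by simp
qed

end

section \<open>The symmetric pair\<close>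

locale symmetric_setting = cartan_algebra br \<theta>
  for br :: "'g::euclidean_space \<Rightarrow> 'g \<Rightarrow> 'g" and \<theta> +
  fixes \<sigma> :: "'g \<Rightarrow> 'g" and t :: "'g set" and Y :: 'g
  assumes sigma: "lie_involution br \<sigma>"
    and sigma_theta: "\<sigma> \<circ> \<theta> = \<theta> \<circ> \<sigma>"
    and noncompact: "\<not> lie_compact br"
    and irreducible: "\<forall>I. lie_ideal br I \<and> \<sigma> ` I \<subseteq> I \<longrightarrow> I = {0} \<or> I = UNIV"
    and t_max: "max_abelian br t (eig1 \<theta> \<inter> eigm1 \<sigma>)"
    and Y_t_plus: "Y \<in> t_plus br t (eigm1 \<theta>)"
begin

lemma linear_sigma: "linear \<sigma>"
  using sigma unfolding lie_involution_def lie_aut_def by blast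

lemma sigma_br: "\<sigma> (br x y) = br (\<sigma> x) (\<sigma> y)"
  using sigma unfolding lie_involution_def lie_aut_def by blast

lemma sigma_sigma [simp]: "\<sigma> (\<sigma> x) = x"
  using sigma unfolding lie_involution_def by blast

lemma sigma_theta_commute: "\<sigma> (\<theta> x) = \<theta> (\<sigma> x)"
  using sigma_theta by (metis comp_apply)

lemmas sigma_simps =
  linear_add[OF linear_sigma] linear_diff[OF linear_sigma] linear_scale[OF linear_sigma]
  linear_neg[OF linear_sigma] linear_0[OF linear_sigma]

lemma t_subset: "t \<subseteq> eig1 \<theta> \<inter> eigm1 \<sigma>" and t_abelian: "Z \<in> t \<Longrightarrow> Z' \<in> t \<Longrightarrow> br Z Z' = 0"
  using t_max unfolding max_abelian_def by blast+

lemma theta_t: "Z \<in> t \<Longrightarrow> \<theta> Z = Z"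
  using t_subset unfolding eig1_def by blast

lemma Y_in_t: "Y \<in> t"
  using Y_t_plus unfolding t_plus_def by blast

lemma sigma_Y: "\<sigma> Y = - Y"
  using t_subset Y_in_t unfolding eigm1_def by blast

sublocale cartan_element br \<theta> Y
  by unfold_locales (rule theta_t[OF Y_in_t])

lemma ad_t_commute: "Z \<in> t \<Longrightarrow> Z' \<in> t \<Longrightarrow> br Z (br Z' x) = br Z' (br Z x)"
  using br_derivation[of Z Z' x] t_abelian by (simp add: br_simps)

lemma t_common_eigenvector:
  assumes "\<theta> x = - x" and "x \<noteq> 0" and "br Y (br Y x) = - (\<nu>\<^sup>2) *\<^sub>R x"
  obtains v b where "\<theta> v = - v" and "v \<noteq> 0" and "br Y (br Y v) = - (\<nu>\<^sup>2) *\<^sub>R v"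
    and "\<And>Z. Z \<in> t \<Longrightarrow> br Z (br Y v) = b Z *\<^sub>R v"
proof -
  define W where "W = {w. \<theta> w = - w \<and> br Y (br Y w) = - (\<nu>\<^sup>2) *\<^sub>R w}"
  define F where "F = (\<lambda>Z w. br Z (br Y w)) ` t"
  note YZ = ad_t_commute[OF Y_in_t]
  have "subspace W"
    unfolding W_def subspace_def by (auto simp: theta_simps br_simps scaleR_add_right)
  have "br Z (br Y (br Z' (br Y w))) = br Z' (br Y (br Z (br Y w)))" if "Z \<in> t" "Z' \<in> t" for Z Z' w
  proof -
    have "br Z (br Y (br Z' (br Y w))) = br Z (br Z' (br Y (br Y w)))"
      by (simp only: YZ[OF that(2)])
    also have "\<dots> = br Z' (br Z (br Y (br Y w)))" by (rule ad_t_commute[OF that])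
    also have "\<dots> = br Z' (br Y (br Z (br Y w)))" by (simp only: YZ[OF that(1)])
    finally show ?thesis .
  qed
  then have comm: "\<forall>S\<in>F. \<forall>T\<in>F. \<forall>w\<in>W. S (T w) = T (S w)"
    unfolding F_def by blast
  have "B\<theta>.symmetric_on W (\<lambda>w. br Z (br Y w))" if "Z \<in> t" for Z
    unfolding B\<theta>.symmetric_on_def
  proof (intro conjI ballI)
    show "linear (\<lambda>w. br Z (br Y w))"
      using linear_compose[OF linear_br_right linear_br_right] by (simp add: o_def)
    show "br Z (br Y w) \<in> W" if "w \<in> W" for w
    proof -
      have "br Y (br Y (br Z (br Y w))) = br Z (br Y (br Y (br Y w)))"
        by (simp only: YZ[OF \<open>Z \<in> t\<close>])
      then show ?thesis
        using \<open>w \<in> W\<close> \<open>Z \<in> t\<close> unfolding W_def by (simp add: theta_br theta_t theta_Y br_simps)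
    qed
    show "B\<theta> (br Z (br Y u)) w = B\<theta> u (br Z (br Y w))" for u w
      using B\<theta>_ad_skew[OF theta_t[OF \<open>Z \<in> t\<close>]] B\<theta>_ad_Y_skew YZ[OF \<open>Z \<in> t\<close>] by simp
  qed
  then have sym: "\<forall>S\<in>F. B\<theta>.symmetric_on W S" unfolding F_def by blast
  have "x \<in> W" using assms unfolding W_def by blast
  then have "\<exists>v\<in>W. v \<noteq> 0 \<and> (\<forall>S\<in>F. \<exists>c. S v = c *\<^sub>R v)"
    by (rule B\<theta>.common_eigenvector[OF \<open>subspace W\<close> sym comm _ \<open>x \<noteq> 0\<close>])
  then obtain v where "v \<in> W" "v \<noteq> 0" and "\<forall>S\<in>F. \<exists>c. S v = c *\<^sub>R v" by blast
  then have "\<forall>Z\<in>t. \<exists>c. br Z (br Y v) = c *\<^sub>R v" unfolding F_def by simp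
  then obtain b where "\<And>Z. Z \<in> t \<Longrightarrow> br Z (br Y v) = b Z *\<^sub>R v"
    by (metis bchoice)
  with \<open>v \<in> W\<close> \<open>v \<noteq> 0\<close> show ?thesis using that unfolding W_def by blast
qed

text \<open>With \<open>v\<close> as above, \<open>v + i [Y, v] / \<nu>\<close> is a root vector of \<open>\<mm>\<^sub>\<complex>\<close>.\<close>
lemma m_root_of_eigenvector:
  assumes "\<theta> x = - x" and "x \<noteq> 0" and "br Y (br Y x) = - (\<nu>\<^sup>2) *\<^sub>R x" and "\<nu> > 0"
  obtains \<beta> where "m_root br t (eigm1 \<theta>) \<beta>" and "\<beta> Y = - \<nu>"
proof -
  obtain v b where v: "\<theta> v = - v" "v \<noteq> 0" "br Y (br Y v) = - (\<nu>\<^sup>2) *\<^sub>R v"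
    and b: "\<And>Z. Z \<in> t \<Longrightarrow> br Z (br Y v) = b Z *\<^sub>R v"
    using t_common_eigenvector[OF assms(1-3)] by blast
  define \<beta> where "\<beta> Z = b Z / \<nu>" for Z
  define X2 where "X2 = (1 / \<nu>) *\<^sub>R br Y v"
  have X2: "\<forall>Z\<in>t. br Z X2 = \<beta> Z *\<^sub>R v"
    unfolding X2_def \<beta>_def using b by (simp add: br_simps)
  have X1: "\<forall>Z\<in>t. br Z v = - (\<beta> Z *\<^sub>R X2)"
  proof
    fix Z assume "Z \<in> t"
    have "(\<nu>\<^sup>2) *\<^sub>R br Z v = - br Z (br Y (br Y v))" using v by (simp add: br_simps)
    also have "br Z (br Y (br Y v)) = br Y (br Z (br Y v))"
      by (simp only: ad_t_commute[OF Y_in_t \<open>Z \<in> t\<close>])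
    also have "- br Y (br Z (br Y v)) = (\<nu>\<^sup>2) *\<^sub>R (- (\<beta> Z *\<^sub>R X2))"
      using b[OF \<open>Z \<in> t\<close>] \<open>\<nu> > 0\<close> unfolding X2_def \<beta>_def
      by (simp add: br_simps power2_eq_square)
    finally have "(\<nu>\<^sup>2) *\<^sub>R br Z v = (\<nu>\<^sup>2) *\<^sub>R (- (\<beta> Z *\<^sub>R X2))" .
    then show "br Z v = - (\<beta> Z *\<^sub>R X2)" using \<open>\<nu> > 0\<close> by (simp only: scaleR_cancel_left) simp
  qed
  have "\<theta> X2 = - X2" unfolding X2_def using v by (simp add: theta_br theta_Y theta_simps br_simps)
  have "\<beta> Y = - \<nu>"
  proof -
    have "b Y *\<^sub>R v = (- (\<nu>\<^sup>2)) *\<^sub>R v" using b[OF Y_in_t] v by simp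
    then have "b Y = - (\<nu>\<^sup>2)" using \<open>v \<noteq> 0\<close> scaleR_cancel_right by blast
    then show ?thesis unfolding \<beta>_def using \<open>\<nu> > 0\<close> by (simp add: power2_eq_square)
  qed
  have "\<exists>X1\<in>eigm1 \<theta>. \<exists>X2\<in>eigm1 \<theta>. (X1 \<noteq> 0 \<or> X2 \<noteq> 0) \<and>
      (\<forall>Z\<in>t. br Z X1 = - (\<beta> Z *\<^sub>R X2) \<and> br Z X2 = \<beta> Z *\<^sub>R X1)"
    using v(1,2) \<open>\<theta> X2 = - X2\<close> X1 X2 unfolding eigm1_def by blast
  moreover have "\<exists>Z\<in>t. \<beta> Z \<noteq> 0" using Y_in_t \<open>\<beta> Y = - \<nu>\<close> \<open>\<nu> > 0\<close> by force
  ultimately have "m_root br t (eigm1 \<theta>) \<beta>" unfolding m_root_def by blast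
  then show ?thesis using \<open>\<beta> Y = - \<nu>\<close> by (rule that)
qed

lemma negsq_eigenvalue_m_less:
  assumes "\<theta> x = - x" and "x \<noteq> 0" and "negsq x = c *\<^sub>R x"
  shows "c < (pi / 2)\<^sup>2"
proof (cases "c > 0")
  case True
  then have "sqrt c > 0" by simp
  obtain \<beta> where "m_root br t (eigm1 \<theta>) \<beta>" and "\<beta> Y = - sqrt c"
    by (rule m_root_of_eigenvector[OF assms(1,2) negsq_eigenvector(3)[OF assms(3,2)] \<open>sqrt c > 0\<close>])
  then have "sqrt c < pi / 2" using Y_t_plus unfolding t_plus_def by auto
  then have "(sqrt c)\<^sup>2 < (pi / 2)\<^sup>2" using True by (intro power_strict_mono) auto
  then show ?thesis using True by simp
next
  case False
  moreover have "(pi / 2)\<^sup>2 > 0" by simp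
  ultimately show ?thesis by linarith
qed

lemma small_element_exists:
  obtains \<kappa> where "small_element br \<theta> Y \<kappa>"
proof -
  have m: "subspace {w. \<theta> w = - w}"
    using subspace_eigm1[OF linear_theta] unfolding eigm1_def .
  have sym: "B\<theta>.symmetric_on {w. \<theta> w = - w} negsq"
    by (rule symmetric_on_negsq) (simp add: theta_negsq linear_neg[OF linear_negsq])
  obtain \<kappa> where "\<kappa> < (pi / 2)\<^sup>2"
    and "\<And>w. \<theta> w = - w \<Longrightarrow> B\<theta> (br Y w) (br Y w) \<le> \<kappa> * B\<theta> w w"
  proof (cases "\<exists>x. \<theta> x = - x \<and> x \<noteq> 0")
    case True
    then obtain x where "x \<in> {w. \<theta> w = - w}" and "x \<noteq> 0" by blast
    then obtain e l where "e \<in> {w. \<theta> w = - w}" "e \<noteq> 0" "negsq e = l *\<^sub>R e"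
      and max: "\<forall>w\<in>{w. \<theta> w = - w}. B\<theta> (negsq w) w \<le> l * B\<theta> w w"
      using B\<theta>.max_eigenvector[OF m sym] by blast
    then have "l < (pi / 2)\<^sup>2" using negsq_eigenvalue_m_less by simp
    moreover have "B\<theta> (br Y w) (br Y w) \<le> l * B\<theta> w w" if "\<theta> w = - w" for w
      using max that B\<theta>_negsq by simp
    ultimately show ?thesis by (rule that)
  next
    case False
    then have "B\<theta> (br Y w) (br Y w) \<le> 0 * B\<theta> w w" if "\<theta> w = - w" for w
      using that by (auto simp: br_simps B\<theta>.B_simps)
    then show ?thesis using that[of 0] by simp
  qed
  then have "small_element br \<theta> Y \<kappa>"
    by (intro small_element.intro cartan_element_axioms) (simp add: small_element_axioms_def)
  then show ?thesis by (rule that)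
qed

lemma k_centralizer_m_trivial:
  assumes "\<theta> e = e" and "\<forall>A. \<theta> A = - A \<longrightarrow> br e A = 0"
  shows "e = 0"
proof -
  define J where "J = {X. \<theta> X = X \<and> (\<forall>A. \<theta> A = - A \<longrightarrow> br X A = 0)}"
  have "\<sigma> ` J \<subseteq> J"
  proof
    fix Z assume "Z \<in> \<sigma> ` J"
    then obtain X where "X \<in> J" and Z: "Z = \<sigma> X" by blast
    have "br Z A = 0" if "\<theta> A = - A" for A
    proof -
      have "\<theta> (\<sigma> A) = - \<sigma> A" using that by (simp add: sigma_theta_commute[symmetric] sigma_simps)
      then have "\<sigma> (br X (\<sigma> A)) = 0" using \<open>X \<in> J\<close> unfolding J_def by (simp add: sigma_simps)
      then show ?thesis unfolding Z by (simp add: sigma_br)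
    qed
    moreover have "\<theta> Z = Z" using \<open>X \<in> J\<close> unfolding Z J_def by (simp add: sigma_theta_commute[symmetric])
    ultimately show "Z \<in> J" unfolding J_def by blast
  qed
  then have "J = {0} \<or> J = UNIV"
    using irreducible lie_ideal_k_centralizer_m unfolding J_def by blast
  moreover have "J \<noteq> UNIV"
    using compact_if_theta_id noncompact unfolding J_def by blast
  ultimately show ?thesis using assms unfolding J_def by blast
qed

lemma sigma_Ad: "\<sigma> (Ad x) = Ad_inv (\<sigma> x)"
  by (rule exp_ad_intertwine[OF linear_br_right linear_br_right linear_sigma])
    (simp add: sigma_br sigma_Y)

lemma tau_sigma_a_eq: "\<sigma> (\<theta> (Ad (\<sigma> (Ad_inv X)))) = Ad_inv (Ad_inv (\<theta> X))"
proof -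
  have "\<sigma> (Ad_inv X) = Ad (\<sigma> X)"
    using sigma_Ad[of "Ad_inv X"] by (metis Ad_Ad_inv sigma_sigma)
  then show ?thesis
    by (simp add: theta_exp_ad theta_Y theta_simps sigma_Ad sigma_theta_commute)
qed

lemma tau_sigma_a_fixed_points:
  "{X. \<sigma> (\<theta> (Ad (\<sigma> (Ad_inv X)))) = X} = {X \<in> eig1 \<theta>. br Y X = 0}"
proof -
  obtain \<kappa> where "small_element br \<theta> Y \<kappa>" by (rule small_element_exists)
  then interpret small_element br \<theta> Y \<kappa> .
  show ?thesis
    unfolding tau_sigma_a_eq eig1_def
    using Ad_inv_sq_theta_fixed_points[OF k_centralizer_m_trivial] by blast
qed

lemma tau_sigma_a_fixes_h'_Ad_h:
  assumes "A \<in> eig1 (\<sigma> \<circ> \<theta>)" and "A \<in> Ad ` eig1 \<sigma>"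
  shows "\<sigma> (\<theta> (Ad (\<sigma> (Ad_inv A)))) = A"
  using assms unfolding eig1_def by (auto simp: Ad_inv_Ad)

lemma tau_sigma_a_fixes_q'_Ad_q:
  assumes "B \<in> eigm1 (\<sigma> \<circ> \<theta>)" and "B \<in> Ad ` eigm1 \<sigma>"
  shows "\<sigma> (\<theta> (Ad (\<sigma> (Ad_inv B)))) = B"
  using assms unfolding eigm1_def
  by (auto simp: Ad_inv_Ad sigma_simps theta_simps linear_neg[OF linear_exp_ad_br])

lemma h'_Ad_h_subset_k: "eig1 (\<sigma> \<circ> \<theta>) \<inter> Ad ` eig1 \<sigma> \<subseteq> eig1 \<theta>"
  using tau_sigma_a_fixes_h'_Ad_h tau_sigma_a_fixed_points by blast

lemma q'_Ad_q_subset_k: "eigm1 (\<sigma> \<circ> \<theta>) \<inter> Ad ` eigm1 \<sigma> \<subseteq> eig1 \<theta>"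
  using tau_sigma_a_fixes_q'_Ad_q tau_sigma_a_fixed_points by blast

lemma h'_Ad_h_Int_q'_Ad_q: "(eig1 (\<sigma> \<circ> \<theta>) \<inter> Ad ` eig1 \<sigma>) \<inter> (eigm1 (\<sigma> \<circ> \<theta>) \<inter> Ad ` eigm1 \<sigma>) = {0}"
proof -
  have "eig1 (\<sigma> \<circ> \<theta>) \<inter> eigm1 (\<sigma> \<circ> \<theta>) = {0}"
    by (rule eig1_Int_eigm1[OF linear_compose[OF linear_theta linear_sigma]])
  moreover have "0 \<in> eig1 \<sigma>" and "0 \<in> eigm1 \<sigma>"
    unfolding eig1_def eigm1_def by (simp_all add: sigma_simps)
  then have "0 \<in> Ad ` eig1 \<sigma>" and "0 \<in> Ad ` eigm1 \<sigma>"
    using image_eqI[of 0 Ad 0] linear_0[OF linear_exp_ad_br, of Y] by simp_all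
  ultimately show ?thesis by blast
qed

lemma centralizer_split:
  assumes "\<theta> X = X" and "br Y X = 0"
  obtains A B where "X = A + B"
    and "A \<in> eig1 (\<sigma> \<circ> \<theta>) \<inter> Ad ` eig1 \<sigma>" and "B \<in> eigm1 (\<sigma> \<circ> \<theta>) \<inter> Ad ` eigm1 \<sigma>"
proof -
  obtain A B where X: "X = A + B" and "\<sigma> A = A" and "\<sigma> B = - B"
    using involution_split[OF linear_sigma sigma_sigma] by blast
  have "\<sigma> (\<theta> A) = \<theta> A" and "\<sigma> (\<theta> B) = - \<theta> B"
    using \<open>\<sigma> A = A\<close> \<open>\<sigma> B = - B\<close> by (simp_all add: sigma_theta_commute theta_simps)
  moreover have "\<theta> A + \<theta> B = A + B" using assms(1) unfolding X by (simp add: theta_simps)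
  ultimately have "\<theta> A = A" and "\<theta> B = B"
    using involution_split_unique[OF linear_sigma _ _ \<open>\<sigma> A = A\<close> \<open>\<sigma> B = - B\<close>] by blast+
  have "\<sigma> (br Y B) = br Y B" and "\<sigma> (br Y A) = - br Y A"
    using \<open>\<sigma> A = A\<close> \<open>\<sigma> B = - B\<close> by (simp_all add: sigma_br sigma_Y br_simps)
  moreover have "br Y B + br Y A = 0 + 0" using assms(2) unfolding X by (simp add: br_simps add.commute)
  moreover have "\<sigma> 0 = 0" and "\<sigma> 0 = - 0" by (simp_all add: sigma_simps)
  ultimately have "br Y B = 0" and "br Y A = 0"
    using involution_split_unique[OF linear_sigma] by blast+
  then have "Ad A = A" and "Ad B = B" by (simp_all add: exp_ad_eq_self[OF linear_br_right])
  have "A \<in> eig1 (\<sigma> \<circ> \<theta>)" and "A \<in> eig1 \<sigma>" and "B \<in> eigm1 (\<sigma> \<circ> \<theta>)" and "B \<in> eigm1 \<sigma>"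
    using \<open>\<sigma> A = A\<close> \<open>\<sigma> B = - B\<close> \<open>\<theta> A = A\<close> \<open>\<theta> B = B\<close> unfolding eig1_def eigm1_def by auto
  then have "A \<in> eig1 (\<sigma> \<circ> \<theta>) \<inter> Ad ` eig1 \<sigma>" and "B \<in> eigm1 (\<sigma> \<circ> \<theta>) \<inter> Ad ` eigm1 \<sigma>"
    using image_eqI[of A Ad A] image_eqI[of B Ad B] \<open>Ad A = A\<close> \<open>Ad B = B\<close> by auto
  with X that show ?thesis by blast
qed

lemma centralizer_decomposition:
  "{X \<in> eig1 \<theta>. br Y X = 0}
     = {A + B | A B. A \<in> eig1 (\<sigma> \<circ> \<theta>) \<inter> Ad ` eig1 \<sigma> \<and> B \<in> eigm1 (\<sigma> \<circ> \<theta>) \<inter> Ad ` eigm1 \<sigma>}"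
proof (intro equalityI subsetI)
  fix X assume "X \<in> {X \<in> eig1 \<theta>. br Y X = 0}"
  then have "\<theta> X = X" and "br Y X = 0" unfolding eig1_def by auto
  then obtain A B where "X = A + B"
    and "A \<in> eig1 (\<sigma> \<circ> \<theta>) \<inter> Ad ` eig1 \<sigma>" and "B \<in> eigm1 (\<sigma> \<circ> \<theta>) \<inter> Ad ` eigm1 \<sigma>"
    by (rule centralizer_split)
  then show "X \<in> {A + B | A B. A \<in> eig1 (\<sigma> \<circ> \<theta>) \<inter> Ad ` eig1 \<sigma> \<and> B \<in> eigm1 (\<sigma> \<circ> \<theta>) \<inter> Ad ` eigm1 \<sigma>}"
    by blast
next
  fix X assume "X \<in> {A + B | A B. A \<in> eig1 (\<sigma> \<circ> \<theta>) \<inter> Ad ` eig1 \<sigma> \<and> B \<in> eigm1 (\<sigma> \<circ> \<theta>) \<inter> Ad ` eigm1 \<sigma>}"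
  then obtain A B where "X = A + B" and "A \<in> eig1 (\<sigma> \<circ> \<theta>) \<inter> Ad ` eig1 \<sigma>"
    and "B \<in> eigm1 (\<sigma> \<circ> \<theta>) \<inter> Ad ` eigm1 \<sigma>" by blast
  have "\<sigma> (\<theta> (Ad (\<sigma> (Ad_inv X))))
      = \<sigma> (\<theta> (Ad (\<sigma> (Ad_inv A)))) + \<sigma> (\<theta> (Ad (\<sigma> (Ad_inv B))))"
    unfolding \<open>X = A + B\<close> by (simp only: linear_add[OF linear_exp_ad_br] sigma_simps theta_simps)
  also have "\<dots> = X"
    using tau_sigma_a_fixes_h'_Ad_h[of A] tau_sigma_a_fixes_q'_Ad_q[of B] \<open>X = A + B\<close> \<open>A \<in> _\<close> \<open>B \<in> _\<close>
    by simp
  finally have "\<sigma> (\<theta> (Ad (\<sigma> (Ad_inv X)))) = X" .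
  then show "X \<in> {X \<in> eig1 \<theta>. br Y X = 0}" using tau_sigma_a_fixed_points by blast
qed

end

theorem lemma2:
  fixes br :: "'g::euclidean_space \<Rightarrow> 'g \<Rightarrow> 'g"
    and \<sigma> \<theta> :: "'g \<Rightarrow> 'g" and t :: "'g set" and Y :: 'g
  defines "k \<equiv> eig1 \<theta>" and "m \<equiv> eigm1 \<theta>" and "h \<equiv> eig1 \<sigma>" and "q \<equiv> eigm1 \<sigma>"
  defines "h' \<equiv> eig1 (\<sigma> \<circ> \<theta>)" and "q' \<equiv> eigm1 (\<sigma> \<circ> \<theta>)"
  defines "Ad \<equiv> exp_ad br Y" and "Adinv \<equiv> exp_ad br (- Y)"
  defines "\<sigma>a \<equiv> Ad \<circ> \<sigma> \<circ> Adinv" and "\<tau> \<equiv> \<sigma> \<circ> \<theta>"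
  assumes ss: "semisimple br"
    and sig: "lie_involution br \<sigma>"
    and cart: "cartan_involution br \<theta>"
    and comm: "\<sigma> \<circ> \<theta> = \<theta> \<circ> \<sigma>"
    and noncpt: "\<not> lie_compact br"
    and irred: "\<forall>I. lie_ideal br I \<and> \<sigma> ` I \<subseteq> I \<longrightarrow> I = {0} \<or> I = UNIV"
    and tmax: "max_abelian br t (k \<inter> q)"
    and Yt: "Y \<in> t_plus br t m"
  shows "{X. \<tau> (\<sigma>a X) = X} = {X \<in> k. br Y X = 0}
     \<and> {X. \<tau> (\<sigma>a X) = X} = {A + B | A B. A \<in> h' \<inter> Ad ` h \<and> B \<in> q' \<inter> Ad ` q}
     \<and> (h' \<inter> Ad ` h) \<inter> (q' \<inter> Ad ` q) = {0}
     \<and> h' \<inter> Ad ` h \<subseteq> k \<and> q' \<inter> Ad ` q \<subseteq> k"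
proof -
  have "lie_bracket br" using ss unfolding semisimple_def by blast
  then interpret M: symmetric_setting br \<theta> \<sigma> t Y
    using sig cart comm noncpt irred tmax Yt unfolding k_def q_def m_def
    by (intro symmetric_setting.intro cartan_algebra.intro lie_algebra.intro
        cartan_algebra_axioms.intro symmetric_setting_axioms.intro)
  have fixed_points: "{X. \<tau> (\<sigma>a X) = X} = {X \<in> k. br Y X = 0}"
    using M.tau_sigma_a_fixed_points unfolding \<tau>_def \<sigma>a_def Ad_def Adinv_def k_def by simp
  show ?thesis
    using fixed_points M.centralizer_decomposition M.h'_Ad_h_Int_q'_Ad_q
      M.h'_Ad_h_subset_k M.q'_Ad_q_subset_k
    unfolding k_def h'_def q'_def h_def q_def Ad_def by simp
qed

end
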